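(* Let $A\in\mathcal{C}^{n\times n}$ be diagonalizable with eigenvalues $\nu_1,\dots,\nu_n\in\mathcal{R}$ (with multiplicity) that are at most finite and satisfy $$1=\nu_1[0]>|\nu_2[0]|\ge\dots\ge|\nu_n[0]|.$$ Let $\mathbf x\in\mathcal{C}^n$ be written as $\mathbf x=\mathbf w_1+\dots+\mathbf w_n$ with $A\mathbf w_j=\nu_j\mathbf w_j$, and assume (i) all $\mathbf w_j$ have at most finite entries, (ii) $\mathbf w_1[0]\neq\mathbf 0$, and (iii) there is a unique index $i_0$ with $|\mathbf w_1^{i_0}[0]|=\max_i|\mathbf w_1^i[0]|$. Then for $\mathbf x_k:=A^k\mathbf x$, $$\frac{\mathbf x_k}{\|\mathbf x_k\|_{\max}}\xrightarrow{wk}\frac{\mathbf w_1}{\|\mathbf w_1\|_{\max}}.$$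
   Context: The Levi-Civita field $\mathcal{R}$ (resp. $\mathcal{C}$) is the set of functions $a:\mathbb Q\to\mathbb R$ (resp. $\mathbb C$) with left-finite support (for every $r\in\mathbb Q$ only finitely many $q<r$ with $a(q)\ne0$), written $a[q]:=a(q)$; addition is pointwise, multiplication is $(ab)[q]=\sum_{q_1+q_2=q}a[q_1]b[q_2]$; $\mathcal{R}$ is a real closed ordered field ($a\succ b$ iff $(a-b)[\lambda(a-b)]>0$) and $\mathcal{C}=\mathcal{R}(i)$ is algebraically closed. $\lambda(a)=\min\{q:a[q]\ne0\}$ ($\lambda(0)=+\infty$); $a$ is at most finite if $\lambda(a)\ge0$. Absolute value: on $\mathcal{R}$, $|a|=a$ if $a\succeq0$ and $-a$ otherwise; on $\mathcal{C}$, $|a+ib|=\sqrt{a^2+b^2}$ for $a,b\in\mathcal{R}$. For $r\in\mathbb Q$, $\|a\|_r:=\sup_{q\le r}|a[q]|\in\mathbb R$. Weak convergence $a_n\xrightarrow{wk}a$: for every real $r>0$ there is $N_0$ with $\|a_n-a\|_{1/r}<r$ for all $n>N_0$. For vectors, weak convergence is coordinatewise, $\mathbf x[0]:=(\mathbf x^1[0],\dots,\mathbf x^n[0])\in\mathbb C^n$, and $\|\mathbf x\|_{\max}=\max_i|\mathbf x^i|$ (maximum w.r.t. the order of $\mathcal{R}$). *)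

theory Defs
  imports Complex_Main
begin

text \<open>An element of R (resp. C) is represented by its coefficient
function rat => real (resp. rat => complex); membership in the field is the predicate
lc_left_finite.\<close>

definition lc_left_finite :: "(rat \<Rightarrow> 'a::zero) \<Rightarrow> bool" where
  "lc_left_finite a \<longleftrightarrow> (\<forall>r. finite {q. q < r \<and> a q \<noteq> 0})"

definition lc_add :: "(rat \<Rightarrow> 'a::plus) \<Rightarrow> (rat \<Rightarrow> 'a) \<Rightarrow> rat \<Rightarrow> 'a" where
  "lc_add a b = (\<lambda>q. a q + b q)"

definition lc_mult :: "(rat \<Rightarrow> 'a::comm_ring_1) \<Rightarrow> (rat \<Rightarrow> 'a) \<Rightarrow> rat \<Rightarrow> 'a" where
  "lc_mult a b = (\<lambda>q. \<Sum>q1\<in>{q1. a q1 \<noteq> 0 \<and> b (q - q1) \<noteq> 0}. a q1 * b (q - q1))"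

definition lc_one :: "rat \<Rightarrow> 'a::comm_ring_1" where
  "lc_one = (\<lambda>q. if q = 0 then 1 else 0)"

definition lc_inverse :: "(rat \<Rightarrow> 'a::comm_ring_1) \<Rightarrow> rat \<Rightarrow> 'a" where
  "lc_inverse a = (THE b. lc_left_finite b \<and> lc_mult a b = lc_one)"

definition lc_at_most_finite :: "(rat \<Rightarrow> 'a::zero) \<Rightarrow> bool" where
  "lc_at_most_finite a \<longleftrightarrow> (\<forall>q<0. a q = 0)"

definition lcr_pos :: "(rat \<Rightarrow> real) \<Rightarrow> bool" where
  "lcr_pos a \<longleftrightarrow> a \<noteq> (\<lambda>q. 0) \<and> a (LEAST q. a q \<noteq> 0) > 0"

definition lcr_le :: "(rat \<Rightarrow> real) \<Rightarrow> (rat \<Rightarrow> real) \<Rightarrow> bool" where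
  "lcr_le a b \<longleftrightarrow> a = b \<or> lcr_pos (\<lambda>q. b q - a q)"

definition lcr_sqrt :: "(rat \<Rightarrow> real) \<Rightarrow> rat \<Rightarrow> real" where
  "lcr_sqrt a = (THE r. lc_left_finite r \<and> lcr_le (\<lambda>q. 0) r \<and> lc_mult r r = a)"

definition lcc_abs :: "(rat \<Rightarrow> complex) \<Rightarrow> rat \<Rightarrow> real" where
  "lcc_abs z = (let re = (\<lambda>q. Re (z q)); im = (\<lambda>q. Im (z q))
                in lcr_sqrt (lc_add (lc_mult re re) (lc_mult im im)))"

definition lcc_of_lcr :: "(rat \<Rightarrow> real) \<Rightarrow> rat \<Rightarrow> complex" where
  "lcc_of_lcr a = (\<lambda>q. complex_of_real (a q))"

text \<open>Vectors in C^n: functions nat => (rat => complex), only indices < n matter.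
  Matrices: nat => nat => (rat => complex).\<close>

definition lc_vec :: "nat \<Rightarrow> (nat \<Rightarrow> rat \<Rightarrow> complex) \<Rightarrow> bool" where
  "lc_vec n x \<longleftrightarrow> (\<forall>i<n. lc_left_finite (x i))"

definition lc_mat :: "nat \<Rightarrow> (nat \<Rightarrow> nat \<Rightarrow> rat \<Rightarrow> complex) \<Rightarrow> bool" where
  "lc_mat n A \<longleftrightarrow> (\<forall>i<n. \<forall>j<n. lc_left_finite (A i j))"

definition lc_matvec :: "nat \<Rightarrow> (nat \<Rightarrow> nat \<Rightarrow> rat \<Rightarrow> complex) \<Rightarrow> (nat \<Rightarrow> rat \<Rightarrow> complex)
    \<Rightarrow> nat \<Rightarrow> rat \<Rightarrow> complex" where
  "lc_matvec n A x = (\<lambda>i q. \<Sum>j<n. lc_mult (A i j) (x j) q)"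

definition lc_matmul :: "nat \<Rightarrow> (nat \<Rightarrow> nat \<Rightarrow> rat \<Rightarrow> complex) \<Rightarrow> (nat \<Rightarrow> nat \<Rightarrow> rat \<Rightarrow> complex)
    \<Rightarrow> nat \<Rightarrow> nat \<Rightarrow> rat \<Rightarrow> complex" where
  "lc_matmul n A B = (\<lambda>i k q. \<Sum>j<n. lc_mult (A i j) (B j k) q)"

definition lc_idmat :: "nat \<Rightarrow> nat \<Rightarrow> rat \<Rightarrow> complex" where
  "lc_idmat = (\<lambda>i j. if i = j then lc_one else (\<lambda>q. 0))"

definition lc_diagmat :: "(nat \<Rightarrow> rat \<Rightarrow> complex) \<Rightarrow> nat \<Rightarrow> nat \<Rightarrow> rat \<Rightarrow> complex" where
  "lc_diagmat d = (\<lambda>i j. if i = j then d i else (\<lambda>q. 0))"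

definition lc_diagonalizable_with :: "nat \<Rightarrow> (nat \<Rightarrow> nat \<Rightarrow> rat \<Rightarrow> complex) \<Rightarrow> (nat \<Rightarrow> rat \<Rightarrow> complex) \<Rightarrow> bool" where
  "lc_diagonalizable_with n A d \<longleftrightarrow>
     (\<exists>P Q. lc_mat n P \<and> lc_mat n Q \<and>
        (\<forall>i<n. \<forall>j<n. lc_matmul n P Q i j = lc_idmat i j) \<and>
        (\<forall>i<n. \<forall>j<n. lc_matmul n Q P i j = lc_idmat i j) \<and>
        (\<forall>i<n. \<forall>j<n. A i j = lc_matmul n (lc_matmul n P (lc_diagmat d)) Q i j))"

definition lc_maxnorm :: "nat \<Rightarrow> (nat \<Rightarrow> rat \<Rightarrow> complex) \<Rightarrow> rat \<Rightarrow> real" where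
  "lc_maxnorm n x = (THE m. (\<exists>i<n. m = lcc_abs (x i)) \<and> (\<forall>i<n. lcr_le (lcc_abs (x i)) m))"

definition lc_normalize :: "nat \<Rightarrow> (nat \<Rightarrow> rat \<Rightarrow> complex) \<Rightarrow> nat \<Rightarrow> rat \<Rightarrow> complex" where
  "lc_normalize n x = (\<lambda>i. lc_mult (x i) (lc_inverse (lcc_of_lcr (lc_maxnorm n x))))"

definition lc_seminorm :: "(rat \<Rightarrow> complex) \<Rightarrow> real \<Rightarrow> real" where
  "lc_seminorm a s = (SUP q\<in>{q. real_of_rat q \<le> s}. cmod (a q))"

definition lc_wk_conv :: "(nat \<Rightarrow> rat \<Rightarrow> complex) \<Rightarrow> (rat \<Rightarrow> complex) \<Rightarrow> bool" where
  "lc_wk_conv a l \<longleftrightarrow> (\<forall>r::real. r > 0 \<longrightarrow>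
      (\<exists>N0. \<forall>k>N0. lc_seminorm (\<lambda>q. a k q - l q) (1 / r) < r))"

definition lc_vec_wk_conv :: "nat \<Rightarrow> (nat \<Rightarrow> nat \<Rightarrow> rat \<Rightarrow> complex) \<Rightarrow> (nat \<Rightarrow> rat \<Rightarrow> complex) \<Rightarrow> bool" where
  "lc_vec_wk_conv n xs l \<longleftrightarrow> (\<forall>i<n. lc_wk_conv (\<lambda>k. xs k i) (l i))"

end

theory Submission
  imports Defs "HOL-Library.Groups_Big_Fun" "HOL-Computational_Algebra.Formal_Power_Series"
begin

text \<open>An at most finite \<open>u\<close> with \<open>u[0] \<noteq> 0\<close> is \<open>u[0] (1 + e)\<close> with \<open>e\<close> infinitesimal, and its inverse
  and square root are power series in \<open>e\<close> of which only finitely many terms contribute below any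
  exponent.

  Write \<open>A\<^sup>k x = \<nu>\<^sub>1\<^sup>k (w\<^sub>1 + \<Sum>\<^sub>j\<^sub>>\<^sub>1 \<rho>\<^sub>j\<^sup>k w\<^sub>j)\<close> with \<open>\<rho>\<^sub>j = \<nu>\<^sub>j / \<nu>\<^sub>1\<close>. All data have their supports in one
  additive monoid \<open>M\<close> of nonnegative rationals with finitely many elements below every bound.
  Writing \<open>\<rho> = a + \<eta>\<close> with \<open>|a| < 1\<close> and \<open>\<eta>\<close> infinitesimal, below a fixed exponent only the
  first few terms of the binomial expansion of \<open>(a + \<eta>)\<^sup>k\<close> survive, each a multiple of
  \<open>(k choose m) a\<^sup>k\<^sup>-\<^sup>m \<longrightarrow> 0\<close>; so \<open>\<rho>\<^sup>k \<longrightarrow> 0\<close> coefficientwise, and \<open>A\<^sup>k x / \<nu>\<^sub>1\<^sup>k \<longrightarrow> w\<^sub>1\<close>.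
  The positive factor \<open>\<nu>\<^sub>1\<^sup>k\<close> cancels in the normalization, the max norm is eventually attained at
  the unique index \<open>i\<^sub>0\<close> maximizing \<open>|w\<^sub>1\<^sup>i[0]|\<close>, and the absolute value of that entry and its
  inverse converge as well, being power series in infinitesimals. Finally,
  coefficientwise convergence inside \<open>M\<close> is uniform on the finitely many exponents of \<open>M\<close> below
  \<open>1/r\<close>, which is weak convergence.\<close>

section \<open>Left-finite coefficient functions\<close>

lemma left_finite_finite_le: "lc_left_finite f \<Longrightarrow> finite {q. q \<le> r \<and> f q \<noteq> 0}"
  unfolding lc_left_finite_def
  by (rule finite_subset[of _ "{q. q < r + 1 \<and> f q \<noteq> 0}"]) auto

lemma left_finite_bounded_below:
  assumes "lc_left_finite f"
  obtains L where "\<And>q. f q \<noteq> 0 \<Longrightarrow> L \<le> q"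
proof (cases "\<exists>q0. f q0 \<noteq> 0")
  case False then show ?thesis using that by auto
next
  case True
  then obtain q0 where q0: "f q0 \<noteq> 0" by auto
  let ?S = "{q. q \<le> q0 \<and> f q \<noteq> 0}"
  have fin: "finite ?S" using left_finite_finite_le[OF assms] .
  have ne: "?S \<noteq> {}" using q0 by auto
  have "\<And>q. f q \<noteq> 0 \<Longrightarrow> Min ?S \<le> q"
  proof -
    fix q assume "f q \<noteq> 0"
    show "Min ?S \<le> q"
    proof (cases "q \<le> q0")
      case True then show ?thesis using fin \<open>f q \<noteq> 0\<close> by (intro Min_le) auto
    next
      case False
      have "Min ?S \<le> q0" using fin q0 by (intro Min_le) auto
      then show ?thesis using False by auto
    qed
  qed
  then show ?thesis using that by blast
qed

lemma left_finite_zero[simp]: "lc_left_finite (\<lambda>q. 0)"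
  by (simp add: lc_left_finite_def)

lemma left_finite_add: "lc_left_finite f \<Longrightarrow> lc_left_finite g \<Longrightarrow> lc_left_finite (\<lambda>q. (f q :: 'a::monoid_add) + g q)"
  unfolding lc_left_finite_def
proof (intro allI)
  fix r assume A: "\<forall>r. finite {q. q < r \<and> f q \<noteq> 0}" and B: "\<forall>r. finite {q. q < r \<and> g q \<noteq> 0}"
  have "finite ({q. q < r \<and> f q \<noteq> 0} \<union> {q. q < r \<and> g q \<noteq> 0})" using A B by blast
  then show "finite {q. q < r \<and> f q + g q \<noteq> 0}"
    by (rule finite_subset[rotated]) auto
qed

lemma left_finite_uminus: "lc_left_finite f \<Longrightarrow> lc_left_finite (\<lambda>q. - (f q :: 'a::group_add))"
  unfolding lc_left_finite_def by simp

lemma left_finite_diff: "lc_left_finite f \<Longrightarrow> lc_left_finite g \<Longrightarrow> lc_left_finite (\<lambda>q. (f q :: 'a::group_add) - g q)"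
proof -
  assume "lc_left_finite f" "lc_left_finite g"
  then have "lc_left_finite (\<lambda>q. f q + - g q)" using left_finite_add[of f "\<lambda>q. - g q"] left_finite_uminus[of g] by blast
  then show ?thesis by (simp only: diff_conv_add_uminus)
qed

lemma left_finite_lc_one: "lc_left_finite (lc_one :: rat \<Rightarrow> 'a::comm_ring_1)"
  unfolding lc_left_finite_def lc_one_def
  by (intro allI, rule finite_subset[of _ "{0}"]) auto

lemma left_finite_comp: "lc_left_finite f \<Longrightarrow> h 0 = 0 \<Longrightarrow> lc_left_finite (\<lambda>q. h (f q))"
  unfolding lc_left_finite_def
proof (intro allI)
  fix r assume "\<forall>r. finite {q. q < r \<and> f q \<noteq> 0}" "h 0 = 0"
  then have "finite {q. q < r \<and> f q \<noteq> 0}" by blast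
  moreover have "{q. q < r \<and> h (f q) \<noteq> 0} \<subseteq> {q. q < r \<and> f q \<noteq> 0}" using \<open>h 0 = 0\<close> by auto
  ultimately show "finite {q. q < r \<and> h (f q) \<noteq> 0}" by (rule finite_subset[rotated])
qed

definition conv_window :: "(rat \<Rightarrow> 'a::zero) \<Rightarrow> (rat \<Rightarrow> 'a) \<Rightarrow> rat \<Rightarrow> rat set" where
  "conv_window a b q = {q1. a q1 \<noteq> 0 \<and> b (q - q1) \<noteq> 0}"

lemma finite_conv_window:
  assumes "lc_left_finite a" "lc_left_finite b"
  shows "finite (conv_window a b q)"
proof -
  obtain L where L: "\<And>q. b q \<noteq> 0 \<Longrightarrow> L \<le> q" using left_finite_bounded_below[OF assms(2)] by blast
  have "conv_window a b q \<subseteq> {q1. q1 \<le> q - L \<and> a q1 \<noteq> 0}"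
  proof
    fix q1 assume "q1 \<in> conv_window a b q"
    then have "a q1 \<noteq> 0" "b (q - q1) \<noteq> 0" by (auto simp: conv_window_def)
    then have "L \<le> q - q1" using L by blast
    then show "q1 \<in> {q1. q1 \<le> q - L \<and> a q1 \<noteq> 0}" using \<open>a q1 \<noteq> 0\<close> by simp
  qed
  then show ?thesis using left_finite_finite_le[OF assms(1), of "q - L"] by (rule finite_subset)
qed

lemma lc_mult_conv_window: "lc_mult a b q = (\<Sum>q1\<in>conv_window a b q. a q1 * b (q - q1))"
  by (simp add: lc_mult_def conv_window_def)

lemma lc_mult_eq_Sum_any:
  assumes "lc_left_finite a" "lc_left_finite b"
  shows "lc_mult a b q = Sum_any (\<lambda>q1. a q1 * b (q - q1))"
  unfolding lc_mult_conv_window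
  by (rule Sum_any.expand_superset[symmetric, OF finite_conv_window[OF assms]]) (auto simp: conv_window_def)

lemma lc_mult_eq_sum_superset:
  assumes "finite F" "conv_window a b q \<subseteq> F"
  shows "lc_mult a b q = (\<Sum>q1\<in>F. a q1 * b (q - q1))"
  unfolding lc_mult_conv_window
  by (rule sum.mono_neutral_left[OF assms]) (auto simp: conv_window_def)

lemma lc_mult_nonzeroE:
  assumes "lc_mult a b q \<noteq> 0"
  obtains q1 where "a q1 \<noteq> 0" "b (q - q1) \<noteq> 0"
proof -
  have "(\<Sum>q1\<in>conv_window a b q. a q1 * b (q - q1)) \<noteq> 0" using assms by (simp add: lc_mult_conv_window)
  then obtain q1 where "q1 \<in> conv_window a b q" by (meson sum.neutral)
  then show ?thesis using that by (auto simp: conv_window_def)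
qed

lemma left_finite_lc_mult:
  assumes a: "lc_left_finite a" and b: "lc_left_finite b"
  shows "lc_left_finite (lc_mult a b)"
  unfolding lc_left_finite_def
proof
  fix r
  obtain La where La: "\<And>q. a q \<noteq> 0 \<Longrightarrow> La \<le> q" using left_finite_bounded_below[OF a] by blast
  obtain Lb where Lb: "\<And>q. b q \<noteq> 0 \<Longrightarrow> Lb \<le> q" using left_finite_bounded_below[OF b] by blast
  have "{q. q < r \<and> lc_mult a b q \<noteq> 0} \<subseteq>
     (\<lambda>(x,y). x + y) ` ({x. x \<le> r - Lb \<and> a x \<noteq> 0} \<times> {y. y \<le> r - La \<and> b y \<noteq> 0})"
  proof
    fix q assume "q \<in> {q. q < r \<and> lc_mult a b q \<noteq> 0}"
    then have q: "q < r" "lc_mult a b q \<noteq> 0" by auto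
    obtain q1 where "a q1 \<noteq> 0" "b (q - q1) \<noteq> 0" by (rule lc_mult_nonzeroE[OF q(2)])
    moreover note La[OF this(1)] Lb[OF this(2)]
    ultimately show "q \<in> (\<lambda>(x,y). x + y) ` ({x. x \<le> r - Lb \<and> a x \<noteq> 0} \<times> {y. y \<le> r - La \<and> b y \<noteq> 0})"
      using q by (intro image_eqI[of _ _ "(q1, q - q1)"]) auto
  qed
  moreover have "finite ((\<lambda>(x,y). x + y) ` ({x. x \<le> r - Lb \<and> a x \<noteq> 0} \<times> {y. y \<le> r - La \<and> b y \<noteq> 0}))"
    using left_finite_finite_le[OF a] left_finite_finite_le[OF b] by auto
  ultimately show "finite {q. q < r \<and> lc_mult a b q \<noteq> 0}" by (rule finite_subset)
qed

lemma finite_conv_products: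
  assumes "lc_left_finite a" "lc_left_finite (b :: rat \<Rightarrow> 'a::comm_ring_1)"
  shows "finite {q1. a q1 * b (q - q1) \<noteq> 0}"
  by (rule finite_subset[OF _ finite_conv_window[OF assms, of q]]) (auto simp: conv_window_def)

lemma lc_mult_commute:
  fixes a b :: "rat \<Rightarrow> 'a::comm_ring_1"
  assumes "lc_left_finite a" "lc_left_finite b"
  shows "lc_mult a b = lc_mult b a"
proof
  fix q
  have "Sum_any (\<lambda>q1. a q1 * b (q - q1)) = Sum_any (\<lambda>q1. b q1 * a (q - q1))"
    by (rule Sum_any.reindex_cong[OF bij_diff[of q]]) (auto simp: fun_eq_iff mult.commute)
  then show "lc_mult a b q = lc_mult b a q"
    by (simp add: lc_mult_eq_Sum_any assms)
qed

lemma lc_mult_add_right: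
  fixes a b c :: "rat \<Rightarrow> 'a::comm_ring_1"
  assumes "lc_left_finite a" "lc_left_finite b" "lc_left_finite c"
  shows "lc_mult a (\<lambda>q. b q + c q) q = lc_mult a b q + lc_mult a c q"
proof -
  have "lc_mult a (\<lambda>q. b q + c q) q = Sum_any (\<lambda>q1. a q1 * b (q - q1) + a q1 * c (q - q1))"
    using left_finite_add[OF assms(2,3)] by (simp add: lc_mult_eq_Sum_any assms distrib_left)
  also have "\<dots> = Sum_any (\<lambda>q1. a q1 * b (q - q1)) + Sum_any (\<lambda>q1. a q1 * c (q - q1))"
    by (rule Sum_any.distrib[OF finite_conv_products finite_conv_products]) (use assms in auto)
  finally show ?thesis by (simp add: lc_mult_eq_Sum_any assms)
qed

lemma lc_mult_one_right:
  fixes a :: "rat \<Rightarrow> 'a::comm_ring_1"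
  assumes "lc_left_finite a"
  shows "lc_mult a lc_one q = a q"
proof -
  have "lc_mult a lc_one q = Sum_any (\<lambda>q1. a q1 * lc_one (q - q1))"
    by (simp add: lc_mult_eq_Sum_any assms left_finite_lc_one)
  also have "\<dots> = Sum_any (\<lambda>q1. if q1 = q then a q1 else 0)"
    by (rule Sum_any.cong) (simp add: lc_one_def)
  also have "\<dots> = a q" by simp
  finally show ?thesis .
qed

lemma finite_triple_product_support:
  fixes a b c :: "rat \<Rightarrow> 'a::comm_ring_1"
  assumes a: "lc_left_finite a" and b: "lc_left_finite b" and c: "lc_left_finite c"
  shows "finite ({v. \<exists>p. a p * b (v - p) * c (q - v) \<noteq> 0} \<times> {p. \<exists>v. a p * b (v - p) * c (q - v) \<noteq> 0})"
proof -
  obtain La where La: "\<And>q. a q \<noteq> 0 \<Longrightarrow> La \<le> q" using left_finite_bounded_below[OF a] by blast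
  obtain Lb where Lb: "\<And>q. b q \<noteq> 0 \<Longrightarrow> Lb \<le> q" using left_finite_bounded_below[OF b] by blast
  obtain Lc where Lc: "\<And>q. c q \<noteq> 0 \<Longrightarrow> Lc \<le> q" using left_finite_bounded_below[OF c] by blast
  have V: "{v. \<exists>p. a p * b (v - p) * c (q - v) \<noteq> 0} \<subseteq> (\<lambda>w. q - w) ` {w. w \<le> q - La - Lb \<and> c w \<noteq> 0}"
  proof
    fix v assume "v \<in> {v. \<exists>p. a p * b (v - p) * c (q - v) \<noteq> 0}"
    then obtain p where "a p * b (v - p) * c (q - v) \<noteq> 0" by blast
    then have nz: "a p \<noteq> 0" "b (v - p) \<noteq> 0" "c (q - v) \<noteq> 0" by auto
    with La[OF nz(1)] Lb[OF nz(2)] show "v \<in> (\<lambda>w. q - w) ` {w. w \<le> q - La - Lb \<and> c w \<noteq> 0}"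
      by (intro image_eqI[of _ _ "q - v"]) auto
  qed
  have P: "{p. \<exists>v. a p * b (v - p) * c (q - v) \<noteq> 0} \<subseteq> {p. p \<le> q - Lc - Lb \<and> a p \<noteq> 0}"
  proof
    fix p assume "p \<in> {p. \<exists>v. a p * b (v - p) * c (q - v) \<noteq> 0}"
    then obtain v where "a p * b (v - p) * c (q - v) \<noteq> 0" by blast
    then have nz: "a p \<noteq> 0" "b (v - p) \<noteq> 0" "c (q - v) \<noteq> 0" by auto
    with Lb[OF nz(2)] Lc[OF nz(3)] show "p \<in> {p. p \<le> q - Lc - Lb \<and> a p \<noteq> 0}" by auto
  qed
  have "finite ((\<lambda>w. q - w) ` {w. w \<le> q - La - Lb \<and> c w \<noteq> 0})"
    by (rule finite_imageI[OF left_finite_finite_le[OF c]])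
  from finite_cartesian_product[OF finite_subset[OF V this] finite_subset[OF P left_finite_finite_le[OF a]]]
  show ?thesis .
qed

lemma lc_mult_assoc:
  fixes a b c :: "rat \<Rightarrow> 'a::comm_ring_1"
  assumes a: "lc_left_finite a" and b: "lc_left_finite b" and c: "lc_left_finite c"
  shows "lc_mult (lc_mult a b) c q = lc_mult a (lc_mult b c) q"
proof -
  define g where "g = (\<lambda>v p. a p * b (v - p) * c (q - v))"
  have "lc_mult (lc_mult a b) c q = Sum_any (\<lambda>v. lc_mult a b v * c (q - v))"
    by (simp add: lc_mult_eq_Sum_any left_finite_lc_mult a b c)
  also have "\<dots> = Sum_any (\<lambda>v. Sum_any (\<lambda>p. g v p))"
  proof (rule Sum_any.cong)
    fix v
    have "lc_mult a b v * c (q - v) = Sum_any (\<lambda>p. a p * b (v - p)) * c (q - v)"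
      by (simp add: lc_mult_eq_Sum_any a b)
    also have "\<dots> = Sum_any (\<lambda>p. a p * b (v - p) * c (q - v))"
      by (rule Sum_any_left_distrib[OF finite_conv_products[OF a b]])
    finally show "lc_mult a b v * c (q - v) = Sum_any (g v)" by (simp add: g_def)
  qed
  also have "\<dots> = Sum_any (\<lambda>p. Sum_any (\<lambda>v. g v p))"
    using finite_triple_product_support[OF a b c, of q] unfolding g_def by (intro Sum_any.swap) auto
  also have "\<dots> = Sum_any (\<lambda>p. a p * lc_mult b c (q - p))"
  proof (rule Sum_any.cong)
    fix p
    have "Sum_any (\<lambda>v. g v p) = Sum_any (\<lambda>u. a p * (b u * c (q - p - u)))"
      by (rule Sum_any.reindex_cong[OF bij_plus_right[of p]]) (auto simp: fun_eq_iff g_def mult.assoc diff_diff_eq add.commute)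
    also have "\<dots> = a p * Sum_any (\<lambda>u. b u * c (q - p - u))"
      by (rule Sum_any_right_distrib[symmetric, OF finite_conv_products[OF b c]])
    finally show "Sum_any (\<lambda>v. g v p) = a p * lc_mult b c (q - p)"
      by (simp add: lc_mult_eq_Sum_any b c)
  qed
  also have "\<dots> = lc_mult a (lc_mult b c) q"
    by (simp add: lc_mult_eq_Sum_any left_finite_lc_mult a b c)
  finally show ?thesis .
qed

text \<open>\<open>real lc\<close> and \<open>complex lc\<close> are the fields \<open>\<R>\<close> and \<open>\<C>\<close>; \<open>coef x q\<close> is \<open>x[q]\<close>.\<close>

typedef (overloaded) 'a lc = "{f :: rat \<Rightarrow> 'a::zero. lc_left_finite f}"
  morphisms coef Abs_lc
  by (rule exI[of _ "\<lambda>q. 0"]) simp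

setup_lifting type_definition_lc

lemma left_finite_coef[simp]: "lc_left_finite (coef x)"
  using coef[of x] by simp

lemma lc_eqI: "(\<And>q. coef x q = coef y q) \<Longrightarrow> x = y"
  by (metis coef_inject ext)

lemma coef_Abs_lc: "lc_left_finite f \<Longrightarrow> coef (Abs_lc f) = f"
  by (simp add: Abs_lc_inverse)

instantiation lc :: (comm_ring_1) comm_ring_1
begin
lift_definition zero_lc :: "'a lc" is "\<lambda>q. 0" by simp
lift_definition one_lc :: "'a lc" is "lc_one" by (rule left_finite_lc_one)
lift_definition plus_lc :: "'a lc \<Rightarrow> 'a lc \<Rightarrow> 'a lc" is "\<lambda>f g q. f q + g q" by (rule left_finite_add)
lift_definition uminus_lc :: "'a lc \<Rightarrow> 'a lc" is "\<lambda>f q. - f q" by (rule left_finite_uminus)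
lift_definition minus_lc :: "'a lc \<Rightarrow> 'a lc \<Rightarrow> 'a lc" is "\<lambda>f g q. f q - g q" by (rule left_finite_diff)
lift_definition times_lc :: "'a lc \<Rightarrow> 'a lc \<Rightarrow> 'a lc" is "lc_mult" by (rule left_finite_lc_mult)

lemma coef_zero[simp]: "coef 0 q = 0" by transfer simp
lemma coef_one: "coef 1 q = (if q = 0 then 1 else 0)" by transfer (simp add: lc_one_def)
lemma coef_add[simp]: "coef (x + y) q = coef x q + coef y q" by transfer simp
lemma coef_uminus[simp]: "coef (- x) q = - coef x q" by transfer simp
lemma coef_diff[simp]: "coef (x - y) q = coef x q - coef y q" by transfer simp
lemma coef_mult: "coef (x * y) = lc_mult (coef x) (coef y)" by transfer simp

instance
proof
  fix a b c :: "'a lc"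
  show "a * b * c = a * (b * c)"
    by (rule lc_eqI) (simp add: coef_mult lc_mult_assoc)
  show "a * b = b * a"
    by (rule lc_eqI) (simp add: coef_mult lc_mult_commute[of "coef a" "coef b"])
  show "1 * a = a"
    by (rule lc_eqI) (simp add: coef_mult lc_mult_commute[of lc_one "coef a"] lc_mult_one_right one_lc.rep_eq left_finite_lc_one)
  show "(a + b) * c = a * c + b * c"
  proof (rule lc_eqI)
    fix q
    have "coef ((a + b) * c) q = lc_mult (coef c) (\<lambda>q. coef a q + coef b q) q"
      by (simp add: coef_mult lc_mult_commute[of "coef c"] plus_lc.rep_eq left_finite_add)
    also have "\<dots> = lc_mult (coef c) (coef a) q + lc_mult (coef c) (coef b) q"
      by (rule lc_mult_add_right) auto
    finally show "coef ((a + b) * c) q = coef (a * c + b * c) q"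
      by (simp add: coef_mult lc_mult_commute[of "coef c"])
  qed
  show "(0::'a lc) \<noteq> 1"
  proof
    assume "(0::'a lc) = 1"
    then have "coef (0::'a lc) 0 = coef 1 0" by simp
    then show False by (simp add: coef_one)
  qed
qed (auto intro!: lc_eqI)

end

lemma coef_sum: "coef (\<Sum>i\<in>I. f i) q = (\<Sum>i\<in>I. coef (f i) q)"
  by (induction I rule: infinite_finite_induct) auto

lemma coef_mult_eq_Sum_any: "coef (x * y) q = Sum_any (\<lambda>q1. coef x q1 * coef y (q - q1))"
  by (simp add: coef_mult lc_mult_eq_Sum_any)

lemma coef_mult_eq_sum_superset:
  assumes "finite F" "\<And>q1. coef x q1 \<noteq> 0 \<Longrightarrow> coef y (q - q1) \<noteq> 0 \<Longrightarrow> q1 \<in> F"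
  shows "coef (x * y) q = (\<Sum>q1\<in>F. coef x q1 * coef y (q - q1))"
  unfolding coef_mult using assms by (intro lc_mult_eq_sum_superset) (auto simp: conv_window_def)

lemma coef_mult_nonzeroE:
  assumes "coef (x * y) q \<noteq> 0"
  obtains q1 where "coef x q1 \<noteq> 0" "coef y (q - q1) \<noteq> 0"
  using assms unfolding coef_mult by (rule lc_mult_nonzeroE)

lift_definition lc_const :: "'a::comm_ring_1 \<Rightarrow> 'a lc" is "\<lambda>c q. if q = 0 then c else 0"
proof -
  fix c :: 'a
  show "lc_left_finite (\<lambda>q. if q = 0 then c else 0)"
    unfolding lc_left_finite_def
  proof
    fix r show "finite {q. q < r \<and> (if q = 0 then c else 0) \<noteq> 0}"
      by (rule finite_subset[of _ "{0}"]) auto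
  qed
qed

lemma coef_lc_const: "coef (lc_const c) q = (if q = 0 then c else 0)"
  by transfer simp

lemma coef_lc_const_mult: "coef (lc_const c * x) q = c * coef x q"
proof -
  have "coef (lc_const c * x) q = Sum_any (\<lambda>q1. if q1 = 0 then c * coef x (q - q1) else 0)"
    unfolding coef_mult_eq_Sum_any by (rule Sum_any.cong) (simp add: coef_lc_const)
  also have "\<dots> = c * coef x q" by simp
  finally show ?thesis .
qed

lemma lc_const_mult: "lc_const (a * b) = lc_const a * lc_const b"
  by (rule lc_eqI) (simp add: coef_lc_const_mult coef_lc_const)

lemma lc_const_one: "lc_const 1 = 1"
  by (rule lc_eqI) (simp add: coef_lc_const coef_one)

lemma lc_const_add: "lc_const (a + b) = lc_const a + lc_const b"
  by (rule lc_eqI) (simp add: coef_lc_const)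

lemma lc_const_zero: "lc_const 0 = 0"
  by (rule lc_eqI) (simp add: coef_lc_const)

definition at_most_finite :: "'a::zero lc \<Rightarrow> bool" where
  "at_most_finite x \<longleftrightarrow> (\<forall>q<0. coef x q = 0)"

definition infinitesimal :: "'a::zero lc \<Rightarrow> bool" where
  "infinitesimal x \<longleftrightarrow> (\<forall>q\<le>0. coef x q = 0)"

lemma infinitesimal_imp_at_most_finite: "infinitesimal x \<Longrightarrow> at_most_finite x"
  by (simp add: infinitesimal_def at_most_finite_def)

lemma lc_const_power: "lc_const a ^ j = lc_const (a ^ j)"
  by (induction j) (simp_all add: lc_const_one lc_const_mult)

lemma of_nat_eq_lc_const: "(of_nat c :: 'a::comm_ring_1 lc) = lc_const (of_nat c)"
  by (induction c) (simp_all add: lc_const_zero lc_const_one lc_const_add)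

lemma at_most_finite_lc_const: "at_most_finite (lc_const c)"
  by (simp add: at_most_finite_def coef_lc_const)

lemma at_most_finite_0: "at_most_finite 0" by (simp add: at_most_finite_def)
lemma at_most_finite_1: "at_most_finite 1" by (simp add: at_most_finite_def coef_one)

lemma at_most_finite_add: "at_most_finite x \<Longrightarrow> at_most_finite y \<Longrightarrow> at_most_finite (x + y)"
  by (simp add: at_most_finite_def)
lemma at_most_finite_diff: "at_most_finite x \<Longrightarrow> at_most_finite y \<Longrightarrow> at_most_finite (x - y)"
  by (simp add: at_most_finite_def)

lemma at_most_finite_mult:
  fixes x y :: "'a::comm_ring_1 lc"
  assumes "at_most_finite x" "at_most_finite y" shows "at_most_finite (x * y)"
  unfolding at_most_finite_def
proof (intro allI impI)
  fix q :: rat assume q: "q < 0"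
  show "coef (x * y) q = 0"
  proof (rule ccontr)
    assume "coef (x * y) q \<noteq> 0"
    then obtain q1 where "coef x q1 \<noteq> 0" "coef y (q - q1) \<noteq> 0" by (rule coef_mult_nonzeroE)
    then have "0 \<le> q1" "0 \<le> q - q1" using assms unfolding at_most_finite_def by (meson not_le)+
    then show False using q by simp
  qed
qed

lemma at_most_finite_sum: "(\<And>i. i \<in> I \<Longrightarrow> at_most_finite (f i)) \<Longrightarrow> at_most_finite (\<Sum>i\<in>I. f i)"
  by (simp add: at_most_finite_def coef_sum)

lemma at_most_finite_power: "at_most_finite (x :: 'a::comm_ring_1 lc) \<Longrightarrow> at_most_finite (x ^ n)"
  by (induction n) (simp_all add: at_most_finite_1 at_most_finite_mult)

lemma coef_mult_at_0:
  fixes x y :: "'a::comm_ring_1 lc"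
  assumes "at_most_finite x" "at_most_finite y"
  shows "coef (x * y) 0 = coef x 0 * coef y 0"
proof -
  have "coef (x * y) 0 = (\<Sum>q1\<in>{0}. coef x q1 * coef y (0 - q1))"
  proof (rule coef_mult_eq_sum_superset)
    fix q1 assume "coef x q1 \<noteq> 0" "coef y (0 - q1) \<noteq> 0"
    then have "0 \<le> q1" "0 \<le> 0 - q1" using assms unfolding at_most_finite_def by (meson not_le)+
    then show "q1 \<in> {0}" by simp
  qed simp
  then show ?thesis by simp
qed

lemma coef_power_at_0:
  fixes x :: "'a::comm_ring_1 lc"
  assumes "at_most_finite x" shows "coef (x ^ n) 0 = coef x 0 ^ n"
  by (induction n) (simp_all add: coef_one coef_mult_at_0 at_most_finite_power assms)

lemma coef_mult_local:
  fixes x y y' :: "'a::comm_ring_1 lc"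
  assumes "at_most_finite x" "\<And>q'. q' \<le> q \<Longrightarrow> coef y q' = coef y' q'"
  shows "coef (x * y) q = coef (x * y') q"
  unfolding coef_mult_eq_Sum_any
proof (rule Sum_any.cong)
  fix q1
  show "coef x q1 * coef y (q - q1) = coef x q1 * coef y' (q - q1)"
  proof (cases "q1 < 0")
    case True then show ?thesis using assms(1) by (simp add: at_most_finite_def)
  next
    case False then show ?thesis using assms(2)[of "q - q1"] by simp
  qed
qed

definition lc_val :: "'a::zero lc \<Rightarrow> rat" where
  "lc_val x = (LEAST q. coef x q \<noteq> 0)"

lemma lc_val_leading:
  assumes "x \<noteq> 0"
  shows "coef x (lc_val x) \<noteq> 0" "\<And>q. q < lc_val x \<Longrightarrow> coef x q = 0"
proof -
  obtain q0 where q0: "coef x q0 \<noteq> 0"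
    using assms by (metis coef_inject ext zero_lc.rep_eq)
  let ?S = "{q. q \<le> q0 \<and> coef x q \<noteq> 0}"
  have fin: "finite ?S" by (rule left_finite_finite_le) simp
  have mem: "Min ?S \<in> ?S" using fin q0 by (intro Min_in) auto
  have low: "\<And>y. coef x y \<noteq> 0 \<Longrightarrow> Min ?S \<le> y"
  proof -
    fix y assume y: "coef x y \<noteq> 0"
    show "Min ?S \<le> y"
    proof (cases "y \<le> q0")
      case True then show ?thesis using fin y by (intro Min_le) auto
    next
      case False then show ?thesis using mem by auto
    qed
  qed
  have eq: "lc_val x = Min ?S"
    unfolding lc_val_def by (rule Least_equality) (use mem low in auto)
  show "coef x (lc_val x) \<noteq> 0" using mem eq by auto
  show "\<And>q. q < lc_val x \<Longrightarrow> coef x q = 0"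
  proof -
    fix q assume a: "q < lc_val x"
    show "coef x q = 0"
    proof (rule ccontr)
      assume "coef x q \<noteq> 0"
      then have "Min ?S \<le> q" by (rule low)
      then show False using a eq by simp
    qed
  qed
qed

lemma lc_val_eqI:
  assumes "coef x p \<noteq> 0" "\<And>q. q < p \<Longrightarrow> coef x q = 0"
  shows "lc_val x = p"
  unfolding lc_val_def by (rule Least_equality) (use assms in \<open>auto simp: not_less[symmetric]\<close>)

lemma coef_mult_lc_val:
  fixes x y :: "'a::idom lc"
  assumes "x \<noteq> 0" "y \<noteq> 0"
  shows "coef (x * y) (lc_val x + lc_val y) = coef x (lc_val x) * coef y (lc_val y)"
    and "\<And>q. q < lc_val x + lc_val y \<Longrightarrow> coef (x * y) q = 0"
proof -
  note lx = lc_val_leading[OF assms(1)] and ly = lc_val_leading[OF assms(2)]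
  have "coef (x * y) (lc_val x + lc_val y) = (\<Sum>q1\<in>{lc_val x}. coef x q1 * coef y (lc_val x + lc_val y - q1))"
  proof (rule coef_mult_eq_sum_superset)
    fix q1 assume a: "coef x q1 \<noteq> 0" "coef y (lc_val x + lc_val y - q1) \<noteq> 0"
    then have "lc_val x \<le> q1" "lc_val y \<le> lc_val x + lc_val y - q1" using lx(2) ly(2) by (meson not_le)+
    then show "q1 \<in> {lc_val x}" by simp
  qed simp
  then show "coef (x * y) (lc_val x + lc_val y) = coef x (lc_val x) * coef y (lc_val y)" by simp
  fix q assume q: "q < lc_val x + lc_val y"
  have "coef (x * y) q = (\<Sum>q1\<in>{}. coef x q1 * coef y (q - q1))"
  proof (rule coef_mult_eq_sum_superset)
    fix q1 assume a: "coef x q1 \<noteq> 0" "coef y (q - q1) \<noteq> 0"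
    then have "lc_val x \<le> q1" "lc_val y \<le> q - q1" using lx(2) ly(2) by (meson not_le)+
    then show "q1 \<in> {}" using q by simp
  qed simp
  then show "coef (x * y) q = 0" by simp
qed

lemma lc_val_mult:
  fixes x y :: "'a::idom lc"
  assumes "x \<noteq> 0" "y \<noteq> 0"
  shows "x * y \<noteq> 0" "lc_val (x * y) = lc_val x + lc_val y"
proof -
  have nz: "coef (x * y) (lc_val x + lc_val y) \<noteq> 0"
    using coef_mult_lc_val(1)[OF assms] lc_val_leading(1)[OF assms(1)] lc_val_leading(1)[OF assms(2)] by simp
  then show "x * y \<noteq> 0" by auto
  show "lc_val (x * y) = lc_val x + lc_val y" by (rule lc_val_eqI[OF nz coef_mult_lc_val(2)[OF assms]])
qed

instance lc :: (idom) idom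
proof
  fix a b :: "'a lc"
  assume "a \<noteq> 0" "b \<noteq> 0"
  then show "a * b \<noteq> 0" by (rule lc_val_mult(1))
qed

section \<open>Evaluation of power series at infinitesimals\<close>

lemma coef_power_nonzero_ge:
  fixes e :: "'a::comm_ring_1 lc"
  assumes "\<forall>q. coef e q \<noteq> 0 \<longrightarrow> d \<le> q"
  shows "coef (e ^ m) q \<noteq> 0 \<Longrightarrow> of_nat m * d \<le> q"
proof (induction m arbitrary: q)
  case 0 then show ?case by (simp add: coef_one split: if_splits)
next
  case (Suc m)
  from Suc.prems have "coef (e * e ^ m) q \<noteq> 0" by simp
  then obtain q1 where "coef e q1 \<noteq> 0" "coef (e ^ m) (q - q1) \<noteq> 0" by (rule coef_mult_nonzeroE)
  then have "d \<le> q1" "of_nat m * d \<le> q - q1" using assms Suc.IH by blast+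
  then show ?case by (simp add: algebra_simps)
qed

lemma coef_power_eq_0_beyond:
  fixes e :: "'a::comm_ring_1 lc"
  assumes "\<forall>q. coef e q \<noteq> 0 \<longrightarrow> d \<le> q" "0 < d" "q < of_nat (Suc N) * d" "Suc N \<le> m"
  shows "coef (e ^ m) q = 0"
proof (rule ccontr)
  assume "coef (e ^ m) q \<noteq> 0"
  then have "of_nat m * d \<le> q" by (rule coef_power_nonzero_ge[OF assms(1)])
  moreover have "of_nat (Suc N) * d \<le> of_nat m * d" using assms(2,4) by (intro mult_right_mono) auto
  ultimately show False using assms(3) by simp
qed

lemma less_Suc_floor_mult:
  fixes q d :: rat
  assumes "0 < d"
  shows "q < of_nat (Suc (nat \<lfloor>q / d\<rfloor>)) * d"
proof -
  have "q / d < of_int \<lfloor>q / d\<rfloor> + 1" by linarith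
  also have "\<dots> \<le> of_nat (Suc (nat \<lfloor>q / d\<rfloor>))" by simp
  finally have "q / d < of_nat (Suc (nat \<lfloor>q / d\<rfloor>))" .
  then show ?thesis using assms by (simp add: divide_less_eq)
qed

definition pos_gap :: "rat set \<Rightarrow> rat" where
  "pos_gap S = Min (insert 1 {q\<in>S. 0 < q \<and> q < 1})"

lemma pos_gap_pos:
  assumes "finite {q\<in>S. q \<le> 1}"
  shows "0 < pos_gap S"
proof -
  have "finite {q\<in>S. 0 < q \<and> q < 1}" by (rule finite_subset[OF _ assms]) auto
  then show ?thesis unfolding pos_gap_def by (subst Min_gr_iff) auto
qed

lemma pos_gap_le:
  assumes "finite {q\<in>S. q \<le> 1}" "q \<in> S" "0 < q"
  shows "pos_gap S \<le> q"
proof -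
  have fin: "finite {q\<in>S. 0 < q \<and> q < 1}" by (rule finite_subset[OF _ assms(1)]) auto
  show ?thesis
  proof (cases "q < 1")
    case True
    then show ?thesis unfolding pos_gap_def using fin assms(2,3) by (intro Min_le) auto
  next
    case False
    have "pos_gap S \<le> 1" unfolding pos_gap_def using fin by (intro Min_le) auto
    with False show ?thesis by simp
  qed
qed

definition exponent_gap :: "'a::zero lc \<Rightarrow> rat" where
  "exponent_gap e = pos_gap {q. coef e q \<noteq> 0}"

lemma finite_coef_support_le: "finite {q\<in>{q. coef e q \<noteq> 0}. q \<le> r}"
  using left_finite_finite_le[OF left_finite_coef, of r e] by (simp add: conj_commute)

lemma exponent_gap_pos: "0 < exponent_gap e"
  unfolding exponent_gap_def by (rule pos_gap_pos[OF finite_coef_support_le])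

lemma exponent_gap_le:
  assumes "infinitesimal e"
  shows "\<forall>q. coef e q \<noteq> 0 \<longrightarrow> exponent_gap e \<le> q"
  using assms unfolding exponent_gap_def infinitesimal_def
  by (auto intro!: pos_gap_le[OF finite_coef_support_le] simp: not_le[symmetric])

lemma truncated_series_stable:
  fixes e :: "'a::comm_ring_1 lc"
  assumes "\<forall>q. coef e q \<noteq> 0 \<longrightarrow> d \<le> q" "0 < d" "q < of_nat (Suc N) * d" "N \<le> N'"
  shows "(\<Sum>m\<le>N'. c m * coef (e ^ m) q) = (\<Sum>m\<le>N. c m * coef (e ^ m) q)"
proof (rule sum.mono_neutral_right)
  show "\<forall>m\<in>{..N'} - {..N}. c m * coef (e ^ m) q = 0"
    using coef_power_eq_0_beyond[OF assms(1-3)] by auto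
qed (use assms(4) in auto)

text \<open>Powers \<open>e\<^sup>m\<close> with \<open>m * exponent_gap e > q\<close> vanish at \<open>q\<close>, so this finite sum is the
  coefficient at \<open>q\<close> of \<open>\<Sum>\<^sub>m f[m] e\<^sup>m\<close>.\<close>

definition fps_eval_coef :: "'a::comm_ring_1 fps \<Rightarrow> 'a lc \<Rightarrow> rat \<Rightarrow> 'a" where
  "fps_eval_coef f e q = (\<Sum>m\<le>nat \<lfloor>q / exponent_gap e\<rfloor>. fps_nth f m * coef (e ^ m) q)"

lemma fps_eval_coef_eq:
  fixes e :: "'a::comm_ring_1 lc"
  assumes "infinitesimal e" "0 < d" "\<forall>q. coef e q \<noteq> 0 \<longrightarrow> d \<le> q" "q < of_nat (Suc N) * d"
  shows "fps_eval_coef f e q = (\<Sum>m\<le>N. fps_nth f m * coef (e ^ m) q)"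
proof -
  let ?N0 = "nat \<lfloor>q / exponent_gap e\<rfloor>"
  let ?M = "max N ?N0"
  have b0: "q < of_nat (Suc ?N0) * exponent_gap e" by (rule less_Suc_floor_mult[OF exponent_gap_pos])
  have "fps_eval_coef f e q = (\<Sum>m\<le>?M. fps_nth f m * coef (e ^ m) q)"
    unfolding fps_eval_coef_def
    by (rule truncated_series_stable[symmetric, OF exponent_gap_le[OF assms(1)] exponent_gap_pos b0]) simp
  also have "\<dots> = (\<Sum>m\<le>N. fps_nth f m * coef (e ^ m) q)"
    by (rule truncated_series_stable[OF assms(3) assms(2) assms(4)]) simp
  finally show ?thesis .
qed

lemma left_finite_fps_eval_coef:
  fixes e :: "'a::comm_ring_1 lc"
  assumes "infinitesimal e"
  shows "lc_left_finite (fps_eval_coef f e)"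
  unfolding lc_left_finite_def
proof
  fix r
  let ?N = "nat \<lfloor>r / exponent_gap e\<rfloor>"
  have "{q. q < r \<and> fps_eval_coef f e q \<noteq> 0} \<subseteq> (\<Union>m\<le>?N. {q. q < r \<and> coef (e ^ m) q \<noteq> 0})"
  proof
    fix q assume "q \<in> {q. q < r \<and> fps_eval_coef f e q \<noteq> 0}"
    then have q: "q < r" "fps_eval_coef f e q \<noteq> 0" by auto
    have "q < of_nat (Suc ?N) * exponent_gap e" using less_Suc_floor_mult[OF exponent_gap_pos, of r e] q(1) by simp
    then have "fps_eval_coef f e q = (\<Sum>m\<le>?N. fps_nth f m * coef (e ^ m) q)"
      by (rule fps_eval_coef_eq[OF assms exponent_gap_pos exponent_gap_le[OF assms]])
    with q(2) obtain m where "m \<le> ?N" "coef (e ^ m) q \<noteq> 0"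
      by (metis (no_types, lifting) atMost_iff mult_zero_right sum.neutral)
    then show "q \<in> (\<Union>m\<le>?N. {q. q < r \<and> coef (e ^ m) q \<noteq> 0})" using q(1) by auto
  qed
  moreover have "finite (\<Union>m\<le>?N. {q. q < r \<and> coef (e ^ m) q \<noteq> 0})"
    using left_finite_coef unfolding lc_left_finite_def by blast
  ultimately show "finite {q. q < r \<and> fps_eval_coef f e q \<noteq> 0}" by (rule finite_subset)
qed

definition fps_eval :: "'a::comm_ring_1 fps \<Rightarrow> 'a lc \<Rightarrow> 'a lc" where
  "fps_eval f e = Abs_lc (fps_eval_coef f e)"

lemma coef_fps_eval:
  fixes e :: "'a::comm_ring_1 lc"
  assumes "infinitesimal e" "0 < d" "\<forall>q. coef e q \<noteq> 0 \<longrightarrow> d \<le> q" "q < of_nat (Suc N) * d"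
  shows "coef (fps_eval f e) q = (\<Sum>m\<le>N. fps_nth f m * coef (e ^ m) q)"
  unfolding fps_eval_def coef_Abs_lc[OF left_finite_fps_eval_coef[OF assms(1)]] by (rule fps_eval_coef_eq[OF assms])

lemma coef_fps_eval_canonical:
  fixes e :: "'a::comm_ring_1 lc"
  assumes "infinitesimal e"
  shows "coef (fps_eval f e) q = (\<Sum>m\<le>nat \<lfloor>q / exponent_gap e\<rfloor>. fps_nth f m * coef (e ^ m) q)"
  by (rule coef_fps_eval[OF assms exponent_gap_pos exponent_gap_le[OF assms] less_Suc_floor_mult[OF exponent_gap_pos]])

lemma at_most_finite_fps_eval:
  fixes e :: "'a::comm_ring_1 lc"
  assumes "infinitesimal e" shows "at_most_finite (fps_eval f e)"
  unfolding at_most_finite_def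
proof (intro allI impI)
  fix q :: rat assume "q < 0"
  then have "\<And>m. coef (e ^ m) q = 0" using at_most_finite_power[OF infinitesimal_imp_at_most_finite[OF assms]] by (simp add: at_most_finite_def)
  then show "coef (fps_eval f e) q = 0" by (simp add: coef_fps_eval_canonical[OF assms])
qed

lemma coef_fps_eval_at_0:
  fixes e :: "'a::comm_ring_1 lc"
  assumes "infinitesimal e" shows "coef (fps_eval f e) 0 = fps_nth f 0"
  using coef_fps_eval[OF assms exponent_gap_pos exponent_gap_le[OF assms], of 0 0 f] exponent_gap_pos[of e] by (simp add: coef_one)

lemma fps_eval_add:
  fixes e :: "'a::comm_ring_1 lc"
  assumes "infinitesimal e" shows "fps_eval (f + g) e = fps_eval f e + fps_eval g e"
  by (rule lc_eqI) (simp add: coef_fps_eval_canonical[OF assms] sum.distrib distrib_right)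

lemma fps_eval_const:
  fixes e :: "'a::comm_ring_1 lc"
  assumes "infinitesimal e" shows "fps_eval (fps_const c) e = lc_const c"
proof (rule lc_eqI)
  fix q
  have "coef (fps_eval (fps_const c) e) q = (\<Sum>m\<le>nat \<lfloor>q / exponent_gap e\<rfloor>. (if m = 0 then c * coef (e ^ m) q else 0))"
    unfolding coef_fps_eval_canonical[OF assms] by (rule sum.cong) auto
  also have "\<dots> = c * coef 1 q" by (simp add: sum.delta)
  finally show "coef (fps_eval (fps_const c) e) q = coef (lc_const c) q" by (simp add: coef_one coef_lc_const)
qed

lemma fps_eval_one:
  fixes e :: "'a::comm_ring_1 lc"
  assumes "infinitesimal e" shows "fps_eval 1 e = 1"
  using fps_eval_const[OF assms, of 1] by (simp add: lc_const_one)

lemma fps_eval_X: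
  fixes e :: "'a::comm_ring_1 lc"
  assumes "infinitesimal e" shows "fps_eval fps_X e = e"
proof (rule lc_eqI)
  fix q
  let ?N = "Suc (nat \<lfloor>q / exponent_gap e\<rfloor>)"
  have "q < of_nat (Suc ?N) * exponent_gap e"
    using less_Suc_floor_mult[OF exponent_gap_pos, of q e] exponent_gap_pos[of e] by (simp add: algebra_simps)
  then have "coef (fps_eval fps_X e) q = (\<Sum>m\<le>?N. fps_nth fps_X m * coef (e ^ m) q)"
    by (rule coef_fps_eval[OF assms exponent_gap_pos exponent_gap_le[OF assms]])
  also have "\<dots> = (\<Sum>m\<le>?N. (if m = 1 then coef (e ^ m) q else 0))"
    by (rule sum.cong) (auto simp: fps_X_def)
  also have "\<dots> = (if 1 \<in> {..?N} then coef (e ^ 1) q else 0)"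
    by (rule sum.delta) simp
  also have "\<dots> = coef e q" by simp
  finally show "coef (fps_eval fps_X e) q = coef e q" .
qed

lemma sum_sum_eq_Cauchy_product:
  fixes f g :: "'a::comm_ring_1 fps"
  assumes "\<And>m. N < m \<Longrightarrow> c m = 0"
  shows "(\<Sum>i\<le>N. \<Sum>j\<le>N. fps_nth f i * fps_nth g j * c (i + j)) = (\<Sum>k\<le>N. fps_nth (f * g) k * c k)"
proof -
  have "(\<Sum>i\<le>N. \<Sum>j\<le>N. fps_nth f i * fps_nth g j * c (i + j))
      = (\<Sum>(i,j)\<in>{..N} \<times> {..N}. fps_nth f i * fps_nth g j * c (i + j))"
    by (rule sum.cartesian_product)
  also have "\<dots> = (\<Sum>(i,j)\<in>{(i,j). i + j \<le> N}. fps_nth f i * fps_nth g j * c (i + j))"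
    by (rule sum.mono_neutral_right) (auto, metis assms mult_zero_right not_le)
  also have "\<dots> = (\<Sum>k\<le>N. \<Sum>i\<le>k. fps_nth f i * fps_nth g (k - i) * c (i + (k - i)))"
    by (rule sum.triangle_reindex_eq)
  also have "\<dots> = (\<Sum>k\<le>N. fps_nth (f * g) k * c k)"
    by (simp add: fps_mult_nth atLeast0AtMost sum_distrib_right)
  finally show ?thesis .
qed

lemma fps_eval_mult:
  fixes e :: "'a::comm_ring_1 lc"
  assumes e: "infinitesimal e" shows "fps_eval (f * g) e = fps_eval f e * fps_eval g e"
proof (rule lc_eqI)
  fix q
  define N where "N = nat \<lfloor>q / exponent_gap e\<rfloor>"
  have hq: "q < of_nat (Suc N) * exponent_gap e" unfolding N_def by (rule less_Suc_floor_mult[OF exponent_gap_pos])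
  define T where "T f = (\<Sum>m\<le>N. lc_const (fps_nth f m) * e ^ m)" for f :: "'a fps"
  have agree: "coef (fps_eval f e) q' = coef (T f) q'" if "q' \<le> q" for f q'
  proof -
    have "q' < of_nat (Suc N) * exponent_gap e" using hq that by simp
    then show ?thesis
      unfolding T_def coef_sum coef_lc_const_mult by (rule coef_fps_eval[OF e exponent_gap_pos exponent_gap_le[OF e]])
  qed
  have T_fin: "at_most_finite (T f)" for f
    unfolding T_def
    by (intro at_most_finite_sum at_most_finite_mult at_most_finite_lc_const at_most_finite_power
        infinitesimal_imp_at_most_finite[OF e])
  have "coef (fps_eval f e * fps_eval g e) q = coef (T f * fps_eval g e) q"
    by (simp only: mult.commute[of _ "fps_eval g e"] coef_mult_local[OF at_most_finite_fps_eval[OF e] agree])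
  also have "\<dots> = coef (T f * T g) q" by (rule coef_mult_local[OF T_fin agree])
  also have "T f * T g = (\<Sum>i\<le>N. \<Sum>j\<le>N. lc_const (fps_nth f i * fps_nth g j) * e ^ (i + j))"
    unfolding T_def sum_product by (simp add: lc_const_mult power_add mult_ac)
  also have "coef \<dots> q = (\<Sum>i\<le>N. \<Sum>j\<le>N. fps_nth f i * fps_nth g j * coef (e ^ (i + j)) q)"
    by (simp add: coef_sum coef_lc_const_mult)
  also have "\<dots> = (\<Sum>k\<le>N. fps_nth (f * g) k * coef (e ^ k) q)"
    by (rule sum_sum_eq_Cauchy_product)
      (simp add: coef_power_eq_0_beyond[OF exponent_gap_le[OF e] exponent_gap_pos hq])
  also have "\<dots> = coef (fps_eval (f * g) e) q"
    by (rule coef_fps_eval[OF e exponent_gap_pos exponent_gap_le[OF e] hq, symmetric])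
  finally show "coef (fps_eval (f * g) e) q = coef (fps_eval f e * fps_eval g e) q" by simp
qed

section \<open>Inverses\<close>

lift_definition lc_shift :: "rat \<Rightarrow> 'a::zero lc \<Rightarrow> 'a lc" is "\<lambda>a f q. f (q - a)"
proof -
  fix a :: rat and f :: "rat \<Rightarrow> 'a"
  assume lf: "lc_left_finite f"
  show "lc_left_finite (\<lambda>q. f (q - a))"
    unfolding lc_left_finite_def
  proof
    fix r
    have "{q. q < r \<and> f (q - a) \<noteq> 0} \<subseteq> (\<lambda>p. p + a) ` {p. p < r - a \<and> f p \<noteq> 0}"
    proof
      fix q assume "q \<in> {q. q < r \<and> f (q - a) \<noteq> 0}"
      then show "q \<in> (\<lambda>p. p + a) ` {p. p < r - a \<and> f p \<noteq> 0}"
        by (intro image_eqI[of _ _ "q - a"]) auto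
    qed
    moreover have "finite ((\<lambda>p. p + a) ` {p. p < r - a \<and> f p \<noteq> 0})"
      using lf unfolding lc_left_finite_def by blast
    ultimately show "finite {q. q < r \<and> f (q - a) \<noteq> 0}" by (rule finite_subset)
  qed
qed

lemma coef_lc_shift: "coef (lc_shift a x) q = coef x (q - a)"
  by transfer simp

lemma lc_shift_0: "lc_shift 0 x = x"
  by (rule lc_eqI) (simp add: coef_lc_shift)

lemma lc_shift_shift: "lc_shift a (lc_shift b x) = lc_shift (a + b) x"
  by (rule lc_eqI) (simp add: coef_lc_shift diff_diff_eq add.commute)

lemma lc_shift_mult:
  fixes x y :: "'a::comm_ring_1 lc"
  shows "lc_shift a x * lc_shift b y = lc_shift (a + b) (x * y)"
proof (rule lc_eqI)
  fix q
  have "Sum_any (\<lambda>q1. coef x (q1 - a) * coef y (q - q1 - b))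
      = Sum_any (\<lambda>p. coef x p * coef y (q - (a + b) - p))"
    by (rule Sum_any.reindex_cong[OF bij_plus_right[of a]]) (auto simp: fun_eq_iff algebra_simps)
  then show "coef (lc_shift a x * lc_shift b y) q = coef (lc_shift (a + b) (x * y)) q"
    by (simp add: coef_mult_eq_Sum_any coef_lc_shift)
qed

text \<open>An at most finite \<open>u\<close> with \<open>u[0] \<noteq> 0\<close> factors as \<open>u[0] (1 + unit_dev u)\<close> with
  \<open>unit_dev u\<close> infinitesimal; inverses and square roots of \<open>u\<close> are then obtained by evaluating
  the power series of \<open>(1 + X)\<^sup>-\<^sup>1\<close> and \<open>(1 + X)\<^sup>1\<^sup>/\<^sup>2\<close> at \<open>unit_dev u\<close>.\<close>

definition unit_dev :: "'a::field lc \<Rightarrow> 'a lc" where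
  "unit_dev u = lc_const (inverse (coef u 0)) * u - 1"

lemma infinitesimal_unit_dev:
  fixes u :: "'a::field lc"
  assumes "at_most_finite u" "coef u 0 \<noteq> 0"
  shows "infinitesimal (unit_dev u)"
  unfolding infinitesimal_def unit_dev_def
proof (intro allI impI)
  fix q :: rat assume "q \<le> 0"
  then show "coef (lc_const (inverse (coef u 0)) * u - 1) q = 0"
    using assms by (cases "q = 0") (auto simp: coef_one coef_lc_const_mult at_most_finite_def)
qed

definition geom_inverse :: "'a::field lc \<Rightarrow> 'a lc" where
  "geom_inverse u = lc_const (inverse (coef u 0)) * fps_eval (inverse (1 + fps_X)) (unit_dev u)"

lemma mult_geom_inverse:
  fixes u :: "'a::field lc"
  assumes "at_most_finite u" "coef u 0 \<noteq> 0"
  shows "u * geom_inverse u = 1"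
proof -
  let ?e = "unit_dev u"
  have e: "infinitesimal ?e" by (rule infinitesimal_unit_dev[OF assms])
  have "u * geom_inverse u = (lc_const (inverse (coef u 0)) * u) * fps_eval (inverse (1 + fps_X)) ?e"
    unfolding geom_inverse_def by (simp add: mult_ac)
  also have "lc_const (inverse (coef u 0)) * u = 1 + ?e" by (simp add: unit_dev_def)
  also have "1 + ?e = fps_eval (1 + fps_X) ?e" by (simp add: fps_eval_add fps_eval_one fps_eval_X e)
  also have "fps_eval (1 + fps_X) ?e * fps_eval (inverse (1 + fps_X)) ?e
      = fps_eval ((1 + fps_X) * inverse (1 + fps_X)) ?e"
    by (rule fps_eval_mult[OF e, symmetric])
  also have "(1 + fps_X) * inverse (1 + fps_X) = (1 :: 'a fps)"
    by (rule inverse_mult_eq_1') simp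
  finally show ?thesis by (simp add: fps_eval_one e)
qed

lemma at_most_finite_geom_inverse:
  fixes u :: "'a::field lc"
  assumes "at_most_finite u" "coef u 0 \<noteq> 0"
  shows "at_most_finite (geom_inverse u)"
  unfolding geom_inverse_def
  by (intro at_most_finite_mult at_most_finite_lc_const at_most_finite_fps_eval infinitesimal_unit_dev[OF assms])

lemma lc_shift_lc_val:
  fixes x :: "'a::comm_ring_1 lc"
  assumes "x \<noteq> 0"
  shows "at_most_finite (lc_shift (- lc_val x) x)" "coef (lc_shift (- lc_val x) x) 0 = coef x (lc_val x)"
    and "lc_shift (lc_val x) (lc_shift (- lc_val x) x) = x"
  using lc_val_leading[OF assms]
  by (auto simp: at_most_finite_def coef_lc_shift lc_shift_shift lc_shift_0)

lemma exists_right_inverse: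
  fixes x :: "'a::field lc"
  assumes "x \<noteq> 0"
  shows "\<exists>y. x * y = 1"
proof -
  let ?u = "lc_shift (- lc_val x) x"
  have u: "at_most_finite ?u" "coef ?u 0 \<noteq> 0"
    using lc_shift_lc_val[OF assms] lc_val_leading(1)[OF assms] by simp_all
  have "x * lc_shift (- lc_val x) (geom_inverse ?u) = lc_shift 0 (?u * geom_inverse ?u)"
    by (subst (1) lc_shift_lc_val(3)[OF assms, symmetric]) (simp add: lc_shift_mult)
  also have "\<dots> = 1" by (simp add: mult_geom_inverse[OF u] lc_shift_0)
  finally show ?thesis by blast
qed

instantiation lc :: (field) field
begin
definition inverse_lc :: "'a lc \<Rightarrow> 'a lc" where
  "inverse_lc x = (if x = 0 then 0 else (SOME y. x * y = 1))"
definition divide_lc :: "'a lc \<Rightarrow> 'a lc \<Rightarrow> 'a lc" where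
  "divide_lc x y = x * inverse y"
lemma mult_some_right_inverse: "(a :: 'a lc) \<noteq> 0 \<Longrightarrow> a * (SOME y. a * y = 1) = 1"
  using exists_right_inverse[of a] by (rule_tac someI_ex) simp

instance
  by standard (auto simp: inverse_lc_def divide_lc_def mult.commute mult_some_right_inverse)
end

lemma inverse_eq_geom_inverse:
  fixes u :: "'a::field lc"
  assumes "at_most_finite u" "coef u 0 \<noteq> 0"
  shows "inverse u = geom_inverse u"
  by (rule inverse_unique[OF mult_geom_inverse[OF assms]])

lemma coef_inverse_at_0:
  fixes u :: "'a::field lc"
  assumes "at_most_finite u" "coef u 0 \<noteq> 0"
  shows "coef (inverse u) 0 = inverse (coef u 0)"
proof -
  have "coef (u * geom_inverse u) 0 = 1" using mult_geom_inverse[OF assms] by (simp add: coef_one)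
  then have "coef u 0 * coef (geom_inverse u) 0 = 1" using coef_mult_at_0[OF assms(1) at_most_finite_geom_inverse[OF assms]] by simp
  then show ?thesis using inverse_eq_geom_inverse[OF assms] assms(2) by (simp add: field_simps)
qed

lemma at_most_finite_inverse:
  fixes u :: "'a::field lc"
  assumes "at_most_finite u" "coef u 0 \<noteq> 0"
  shows "at_most_finite (inverse u)"
  using at_most_finite_geom_inverse[OF assms] by (simp add: inverse_eq_geom_inverse[OF assms])

lemma lc_inverse_coef:
  fixes x :: "'a::field lc"
  assumes "x \<noteq> 0"
  shows "lc_inverse (coef x) = coef (inverse x)"
  unfolding lc_inverse_def
proof (rule the1_equality)
  have "lc_mult (coef x) (coef (inverse x)) = coef (x * inverse x)" by (simp add: coef_mult)
  also have "\<dots> = lc_one" using assms by (simp add: one_lc.rep_eq)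
  finally have P: "lc_left_finite (coef (inverse x)) \<and> lc_mult (coef x) (coef (inverse x)) = lc_one" by simp
  show "\<exists>!b. lc_left_finite b \<and> lc_mult (coef x) b = lc_one"
  proof (rule ex1I[where a="coef (inverse x)"])
    show "lc_left_finite (coef (inverse x)) \<and> lc_mult (coef x) (coef (inverse x)) = lc_one" by (rule P)
  next
    fix b assume b: "lc_left_finite b \<and> lc_mult (coef x) b = lc_one"
    then have "coef (x * Abs_lc b) = coef 1" by (simp add: coef_mult coef_Abs_lc one_lc.rep_eq)
    then have "x * Abs_lc b = 1" by (simp add: coef_inject)
    then have "Abs_lc b = inverse x" by (rule inverse_unique[symmetric])
    then show "b = coef (inverse x)" using b by (metis coef_Abs_lc)
  qed
  show "lc_left_finite (coef (inverse x)) \<and> lc_mult (coef x) (coef (inverse x)) = lc_one" by (rule P)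
qed

section \<open>Order, square roots and absolute values\<close>

definition lc_pos :: "real lc \<Rightarrow> bool" where
  "lc_pos x \<longleftrightarrow> x \<noteq> 0 \<and> coef x (lc_val x) > 0"

definition lc_nonneg :: "real lc \<Rightarrow> bool" where
  "lc_nonneg x \<longleftrightarrow> x = 0 \<or> lc_pos x"

lemma coef_eq_zero_iff: "coef x = (\<lambda>q. 0) \<longleftrightarrow> x = 0"
  using coef_inject[of x 0] by (simp add: zero_lc.rep_eq)

lemma lcr_pos_coef: "lcr_pos (coef x) \<longleftrightarrow> lc_pos x"
  unfolding lcr_pos_def lc_pos_def lc_val_def by (simp add: coef_eq_zero_iff)

lemma lcr_nonneg_coef: "lcr_le (\<lambda>q. 0) (coef x) \<longleftrightarrow> lc_nonneg x"
proof -
  have "(\<lambda>q. coef x q - 0) = coef x" by simp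
  then show ?thesis unfolding lcr_le_def lc_nonneg_def lcr_pos_coef[symmetric]
    using coef_eq_zero_iff[of x] by auto
qed

lemma lc_posI:
  assumes "coef x p > 0" "\<And>q. q < p \<Longrightarrow> coef x q = 0"
  shows "lc_pos x" "lc_val x = p"
proof -
  have "coef x p \<noteq> 0" using assms(1) by simp
  then show lx: "lc_val x = p" by (rule lc_val_eqI) (rule assms(2))
  have "x \<noteq> 0" using assms(1) by auto
  then show "lc_pos x" using assms(1) lx by (simp add: lc_pos_def)
qed

lemma lc_pos_if_coef_0_pos:
  assumes "at_most_finite x" "0 < coef x 0"
  shows "lc_pos x"
  using assms by (intro lc_posI(1)[of _ 0]) (auto simp: at_most_finite_def)

lemma lc_nonneg_mult:
  assumes "lc_nonneg x" "lc_nonneg y" shows "lc_nonneg (x * y)"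
proof (cases "x = 0 \<or> y = 0")
  case True then show ?thesis by (auto simp: lc_nonneg_def)
next
  case False
  then have px: "lc_pos x" and py: "lc_pos y" using assms by (auto simp: lc_nonneg_def)
  have "x \<noteq> 0" "y \<noteq> 0" using False by auto
  note ml = coef_mult_lc_val[OF this]
  have "coef (x * y) (lc_val x + lc_val y) > 0" using px py by (simp add: ml(1) lc_pos_def)
  then have "lc_pos (x * y)" using ml(2) by (rule lc_posI)
  then show ?thesis by (simp add: lc_nonneg_def)
qed

lemma lc_nonneg_square: "lc_nonneg (x * x)"
proof (cases "x = 0")
  case True then show ?thesis by (simp add: lc_nonneg_def)
next
  case False
  note ml = coef_mult_lc_val[OF False False]
  have "coef (x * x) (lc_val x + lc_val x) > 0" unfolding ml(1) using lc_val_leading(1)[OF False] not_real_square_gt_zero[of "coef x (lc_val x)"] by blast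
  then have "lc_pos (x * x)" using ml(2) by (rule lc_posI)
  then show ?thesis by (simp add: lc_nonneg_def)
qed

lemma lc_nonneg_antisym:
  assumes "lc_nonneg x" "lc_nonneg (- x)" shows "x = 0"
proof (rule ccontr)
  assume nz: "x \<noteq> 0"
  then have "lc_pos x" "lc_pos (- x)" using assms by (auto simp: lc_nonneg_def)
  have "lc_val (- x) = lc_val x" unfolding lc_val_def by simp
  then show False using \<open>lc_pos x\<close> \<open>lc_pos (- x)\<close> by (simp add: lc_pos_def)
qed

lemma lc_nonneg_square_inj:
  assumes "lc_nonneg r1" "lc_nonneg r2" "r1 * r1 = r2 * r2"
  shows "r1 = r2"
proof -
  have "(r1 - r2) * (r1 + r2) = 0" using assms(3) by (simp add: algebra_simps)
  then have "r1 = r2 \<or> r1 = - r2" by (auto simp: eq_neg_iff_add_eq_0)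
  then show ?thesis
  proof
    assume e: "r1 = - r2"
    then have "r2 = 0" using lc_nonneg_antisym[of r2] assms(1,2) by simp
    then show ?thesis using e by simp
  qed
qed

definition binomial_sqrt :: "real lc \<Rightarrow> real lc" where
  "binomial_sqrt u = lc_const (sqrt (coef u 0)) * fps_eval (fps_binomial (1/2)) (unit_dev u)"

lemma binomial_sqrt_square:
  fixes u :: "real lc"
  assumes "at_most_finite u" "0 < coef u 0"
  shows "binomial_sqrt u * binomial_sqrt u = u"
proof -
  let ?c = "coef u 0" and ?e = "unit_dev u"
  have e: "infinitesimal ?e" using assms by (intro infinitesimal_unit_dev) auto
  have "binomial_sqrt u * binomial_sqrt u
      = (lc_const (sqrt ?c) * lc_const (sqrt ?c)) * (fps_eval (fps_binomial (1/2)) ?e * fps_eval (fps_binomial (1/2)) ?e)"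
    unfolding binomial_sqrt_def by (simp add: mult_ac)
  also have "fps_eval (fps_binomial (1/2)) ?e * fps_eval (fps_binomial (1/2)) ?e
      = fps_eval (fps_binomial (1/2) * fps_binomial (1/2)) ?e"
    by (rule fps_eval_mult[OF e, symmetric])
  also have "fps_binomial (1/2) * fps_binomial (1/2) = (1 + fps_X :: real fps)"
    by (simp add: fps_binomial_add_mult[symmetric] fps_binomial_1)
  also have "fps_eval (1 + fps_X) ?e = 1 + ?e"
    by (simp add: fps_eval_add fps_eval_one fps_eval_X e)
  also have "lc_const (sqrt ?c) * lc_const (sqrt ?c) * (1 + ?e) = u"
    using assms(2) by (simp add: unit_dev_def lc_const_mult[symmetric] mult.assoc[symmetric] lc_const_one)
  finally show ?thesis .
qed

lemma at_most_finite_binomial_sqrt: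
  fixes u :: "real lc"
  assumes "at_most_finite u" "0 < coef u 0"
  shows "at_most_finite (binomial_sqrt u)" "coef (binomial_sqrt u) 0 = sqrt (coef u 0)"
  using assms infinitesimal_unit_dev[of u]
  by (simp_all add: binomial_sqrt_def coef_lc_const_mult coef_fps_eval_at_0 at_most_finite_mult
      at_most_finite_lc_const at_most_finite_fps_eval)

lemma lc_nonneg_sqrt_exists:
  fixes s :: "real lc"
  assumes "lc_nonneg s"
  shows "\<exists>r. lc_nonneg r \<and> r * r = s"
proof (cases "s = 0")
  case True then show ?thesis by (intro exI[of _ 0]) (simp add: lc_nonneg_def)
next
  case False
  let ?m = "lc_val s"
  let ?u = "lc_shift (- ?m) s"
  have u: "at_most_finite ?u" "0 < coef ?u 0"
    using lc_shift_lc_val[OF False] assms False by (simp_all add: lc_nonneg_def lc_pos_def)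
  define r where "r = lc_shift (?m / 2) (binomial_sqrt ?u)"
  have "r * r = lc_shift (?m / 2 + ?m / 2) (binomial_sqrt ?u * binomial_sqrt ?u)"
    unfolding r_def by (rule lc_shift_mult)
  also have "\<dots> = s" using lc_shift_lc_val(3)[OF False] by (simp add: binomial_sqrt_square[OF u])
  finally have "r * r = s" .
  moreover have "lc_pos r"
  proof (rule lc_posI)
    show "0 < coef r (?m / 2)" using u by (simp add: r_def coef_lc_shift at_most_finite_binomial_sqrt)
    show "coef r q = 0" if "q < ?m / 2" for q
      using that at_most_finite_binomial_sqrt(1)[OF u] by (simp add: r_def coef_lc_shift at_most_finite_def)
  qed
  ultimately show ?thesis by (auto simp: lc_nonneg_def)
qed

lemma lcr_sqrt_coef:
  fixes s :: "real lc"
  assumes "lc_nonneg s" "lc_nonneg r" "r * r = s"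
  shows "lcr_sqrt (coef s) = coef r"
  unfolding lcr_sqrt_def
proof (rule the1_equality)
  have P: "lc_left_finite (coef r) \<and> lcr_le (\<lambda>q. 0) (coef r) \<and> lc_mult (coef r) (coef r) = coef s"
    using assms by (simp add: lcr_nonneg_coef coef_mult[symmetric])
  show "\<exists>!b. lc_left_finite b \<and> lcr_le (\<lambda>q. 0) b \<and> lc_mult b b = coef s"
  proof (rule ex1I[where a="coef r"])
    show "lc_left_finite (coef r) \<and> lcr_le (\<lambda>q. 0) (coef r) \<and> lc_mult (coef r) (coef r) = coef s" by (rule P)
  next
    fix b assume b: "lc_left_finite b \<and> lcr_le (\<lambda>q. 0) b \<and> lc_mult b b = coef s"
    then have "lc_nonneg (Abs_lc b)" "Abs_lc b * Abs_lc b = s"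
      by (simp_all add: lcr_nonneg_coef[symmetric] coef_Abs_lc coef_inject[symmetric] coef_mult)
    then have "Abs_lc b = r" using lc_nonneg_square_inj assms by metis
    then show "b = coef r" using b by (metis coef_Abs_lc)
  qed
  show "lc_left_finite (coef r) \<and> lcr_le (\<lambda>q. 0) (coef r) \<and> lc_mult (coef r) (coef r) = coef s" by (rule P)
qed

lift_definition lc_of_real :: "real lc \<Rightarrow> complex lc" is "\<lambda>f q. complex_of_real (f q)"
  by (rule left_finite_comp) simp_all

lift_definition lc_Re :: "complex lc \<Rightarrow> real lc" is "\<lambda>f q. Re (f q)"
  by (rule left_finite_comp) simp_all

lift_definition lc_Im :: "complex lc \<Rightarrow> real lc" is "\<lambda>f q. Im (f q)"
  by (rule left_finite_comp) simp_all

lemma coef_lc_of_real: "coef (lc_of_real t) q = complex_of_real (coef t q)" by transfer simp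
lemma coef_lc_Re: "coef (lc_Re z) q = Re (coef z q)" by transfer simp
lemma coef_lc_Im: "coef (lc_Im z) q = Im (coef z q)" by transfer simp

lemma lcc_of_lcr_coef: "lcc_of_lcr (coef t) = coef (lc_of_real t)"
  by (simp add: lcc_of_lcr_def fun_eq_iff coef_lc_of_real)

lemma lc_of_real_mult: "lc_of_real (a * b) = lc_of_real a * lc_of_real b"
proof (rule lc_eqI)
  fix q
  have "coef (lc_of_real a * lc_of_real b) q = Sum_any (\<lambda>q1. complex_of_real (coef a q1 * coef b (q - q1)))"
    unfolding coef_mult_eq_Sum_any by (simp add: coef_lc_of_real)
  also have "\<dots> = complex_of_real (Sum_any (\<lambda>q1. coef a q1 * coef b (q - q1)))"
  proof -
    let ?W = "conv_window (coef a) (coef b) q"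
    have fin: "finite ?W" by (rule finite_conv_window) simp_all
    have "Sum_any (\<lambda>q1. complex_of_real (coef a q1 * coef b (q - q1))) = (\<Sum>q1\<in>?W. complex_of_real (coef a q1 * coef b (q - q1)))"
      by (rule Sum_any.expand_superset[OF fin]) (auto simp: conv_window_def)
    also have "\<dots> = complex_of_real (\<Sum>q1\<in>?W. coef a q1 * coef b (q - q1))" by simp
    also have "(\<Sum>q1\<in>?W. coef a q1 * coef b (q - q1)) = Sum_any (\<lambda>q1. coef a q1 * coef b (q - q1))"
      by (rule Sum_any.expand_superset[OF fin, symmetric]) (auto simp: conv_window_def)
    finally show ?thesis .
  qed
  finally show "coef (lc_of_real (a * b)) q = coef (lc_of_real a * lc_of_real b) q" by (simp add: coef_lc_of_real coef_mult_eq_Sum_any)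
qed

lemma lc_of_real_one: "lc_of_real 1 = 1" by (rule lc_eqI) (simp add: coef_lc_of_real coef_one)
lemma lc_of_real_zero: "lc_of_real 0 = 0" by (rule lc_eqI) (simp add: coef_lc_of_real)
lemma lc_of_real_power: "lc_of_real (a ^ n) = lc_of_real a ^ n" by (induction n) (simp_all add: lc_of_real_one lc_of_real_mult)
lemma lc_of_real_eq_0_iff: "lc_of_real a = 0 \<longleftrightarrow> a = 0"
proof
  assume "lc_of_real a = 0"
  then have "\<And>q. coef (lc_of_real a) q = 0" by simp
  then show "a = 0" by (intro lc_eqI) (simp add: coef_lc_of_real)
qed (simp add: lc_of_real_zero)

lemma lc_Re_of_real_mult: "lc_Re (lc_of_real t * z) = t * lc_Re z"
proof (rule lc_eqI)
  fix q
  let ?W = "conv_window (coef (lc_of_real t)) (coef z) q"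
  have fin: "finite ?W" by (rule finite_conv_window) simp_all
  have "coef (lc_Re (lc_of_real t * z)) q = Re (\<Sum>q1\<in>?W. complex_of_real (coef t q1) * coef z (q - q1))"
    by (simp add: coef_lc_Re coef_mult lc_mult_conv_window coef_lc_of_real)
  also have "\<dots> = (\<Sum>q1\<in>?W. coef t q1 * Re (coef z (q - q1)))"
    by (simp add: Re_sum)
  also have "\<dots> = coef (t * lc_Re z) q"
  proof -
    have "coef (t * lc_Re z) q = (\<Sum>q1\<in>?W. coef t q1 * coef (lc_Re z) (q - q1))"
      by (rule coef_mult_eq_sum_superset[OF fin]) (auto simp: conv_window_def coef_lc_of_real coef_lc_Re)
    then show ?thesis by (simp add: coef_lc_Re)
  qed
  finally show "coef (lc_Re (lc_of_real t * z)) q = coef (t * lc_Re z) q" .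
qed

lemma lc_Im_of_real_mult: "lc_Im (lc_of_real t * z) = t * lc_Im z"
proof (rule lc_eqI)
  fix q
  let ?W = "conv_window (coef (lc_of_real t)) (coef z) q"
  have fin: "finite ?W" by (rule finite_conv_window) simp_all
  have "coef (lc_Im (lc_of_real t * z)) q = Im (\<Sum>q1\<in>?W. complex_of_real (coef t q1) * coef z (q - q1))"
    by (simp add: coef_lc_Im coef_mult lc_mult_conv_window coef_lc_of_real)
  also have "\<dots> = (\<Sum>q1\<in>?W. coef t q1 * Im (coef z (q - q1)))"
    by (simp add: Im_sum)
  also have "\<dots> = coef (t * lc_Im z) q"
  proof -
    have "coef (t * lc_Im z) q = (\<Sum>q1\<in>?W. coef t q1 * coef (lc_Im z) (q - q1))"
      by (rule coef_mult_eq_sum_superset[OF fin]) (auto simp: conv_window_def coef_lc_of_real coef_lc_Im)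
    then show ?thesis by (simp add: coef_lc_Im)
  qed
  finally show "coef (lc_Im (lc_of_real t * z)) q = coef (t * lc_Im z) q" .
qed

definition lc_cmod_sq :: "complex lc \<Rightarrow> real lc" where
  "lc_cmod_sq z = lc_Re z * lc_Re z + lc_Im z * lc_Im z"

lemma lc_pos_sum_squares:
  fixes a b :: "real lc"
  assumes "a \<noteq> 0" "b \<noteq> 0" "lc_val a \<le> lc_val b"
  shows "lc_pos (a * a + b * b)"
proof -
  note ma = coef_mult_lc_val[OF assms(1) assms(1)] and mb = coef_mult_lc_val[OF assms(2) assms(2)]
  let ?p = "lc_val a + lc_val a"
  have "coef (a * a) ?p > 0" unfolding ma(1)
    using lc_val_leading(1)[OF assms(1)] not_real_square_gt_zero[of "coef a (lc_val a)"] by blast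
  moreover have "coef (b * b) ?p \<ge> 0"
  proof (cases "?p < lc_val b + lc_val b")
    case True then show ?thesis using mb(2) by simp
  next
    case False
    then have "?p = lc_val b + lc_val b" using assms(3) by simp
    then show ?thesis using mb(1) by simp
  qed
  ultimately have "coef (a * a + b * b) ?p > 0" by simp
  moreover have "\<And>q. q < ?p \<Longrightarrow> coef (a * a + b * b) q = 0"
    using ma(2) mb(2) assms(3) by simp
  ultimately show ?thesis by (rule lc_posI)
qed

lemma lc_nonneg_sum_squares: "lc_nonneg (a * a + b * b)"
proof (cases "a = 0 \<or> b = 0")
  case True then show ?thesis using lc_nonneg_square[of a] lc_nonneg_square[of b] by auto
next
  case False
  then have "a \<noteq> 0" "b \<noteq> 0" by auto
  then have "lc_pos (a * a + b * b)"
    using lc_pos_sum_squares[of a b] lc_pos_sum_squares[of b a] by (cases "lc_val a \<le> lc_val b") (auto simp: add.commute)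
  then show ?thesis by (simp add: lc_nonneg_def)
qed

lemma lc_nonneg_cmod_sq: "lc_nonneg (lc_cmod_sq z)"
  unfolding lc_cmod_sq_def by (rule lc_nonneg_sum_squares)

definition lc_cmod :: "complex lc \<Rightarrow> real lc" where
  "lc_cmod z = (SOME r. lc_nonneg r \<and> r * r = lc_cmod_sq z)"

lemma lc_cmod_sqrt: "lc_nonneg (lc_cmod z)" "lc_cmod z * lc_cmod z = lc_cmod_sq z"
proof -
  have "\<exists>r. lc_nonneg r \<and> r * r = lc_cmod_sq z" by (rule lc_nonneg_sqrt_exists[OF lc_nonneg_cmod_sq])
  then have "lc_nonneg (lc_cmod z) \<and> lc_cmod z * lc_cmod z = lc_cmod_sq z" unfolding lc_cmod_def by (rule someI_ex)
  then show "lc_nonneg (lc_cmod z)" "lc_cmod z * lc_cmod z = lc_cmod_sq z" by auto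
qed

lemma lc_cmod_unique: "lc_nonneg r \<Longrightarrow> r * r = lc_cmod_sq z \<Longrightarrow> lc_cmod z = r"
  using lc_nonneg_square_inj lc_cmod_sqrt by metis

lemma lcc_abs_coef: "lcc_abs (coef z) = coef (lc_cmod z)"
proof -
  have "lc_add (lc_mult (\<lambda>q. Re (coef z q)) (\<lambda>q. Re (coef z q))) (lc_mult (\<lambda>q. Im (coef z q)) (\<lambda>q. Im (coef z q)))
        = coef (lc_cmod_sq z)"
    unfolding lc_cmod_sq_def by (simp add: lc_add_def coef_mult fun_eq_iff coef_lc_Re[abs_def] coef_lc_Im[abs_def])
  then show ?thesis
    unfolding lcc_abs_def Let_def using lcr_sqrt_coef[OF lc_nonneg_cmod_sq lc_cmod_sqrt(1) lc_cmod_sqrt(2)] by simp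
qed

lemma lc_cmod_of_real_mult:
  assumes "lc_nonneg t" shows "lc_cmod (lc_of_real t * z) = t * lc_cmod z"
proof (rule lc_cmod_unique)
  show "lc_nonneg (t * lc_cmod z)" by (rule lc_nonneg_mult[OF assms lc_cmod_sqrt(1)])
  have "(t * lc_cmod z) * (t * lc_cmod z) = t * t * (lc_cmod z * lc_cmod z)" by (simp add: mult_ac)
  also have "\<dots> = lc_cmod_sq (lc_of_real t * z)" unfolding lc_cmod_sqrt(2) lc_cmod_sq_def lc_Re_of_real_mult lc_Im_of_real_mult
    by (simp add: algebra_simps)
  finally show "(t * lc_cmod z) * (t * lc_cmod z) = lc_cmod_sq (lc_of_real t * z)" .
qed

lemma at_most_finite_lc_of_real: "at_most_finite t \<Longrightarrow> at_most_finite (lc_of_real t)"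
  by (simp add: at_most_finite_def coef_lc_of_real)

lemma at_most_finite_lc_Re: "at_most_finite z \<Longrightarrow> at_most_finite (lc_Re z)" by (simp add: at_most_finite_def coef_lc_Re)
lemma at_most_finite_lc_Im: "at_most_finite z \<Longrightarrow> at_most_finite (lc_Im z)" by (simp add: at_most_finite_def coef_lc_Im)

lemma at_most_finite_lc_cmod_sq:
  assumes "at_most_finite z"
  shows "at_most_finite (lc_cmod_sq z)" "coef (lc_cmod_sq z) 0 = (cmod (coef z 0))\<^sup>2"
  using assms unfolding lc_cmod_sq_def
  by (simp_all add: at_most_finite_add at_most_finite_mult at_most_finite_lc_Re at_most_finite_lc_Im coef_mult_at_0 coef_lc_Re coef_lc_Im cmod_def power2_eq_square)

lemma at_most_finite_nonneg_sqrt: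
  fixes r :: "real lc"
  assumes r: "lc_nonneg r" and rT: "r * r = T" and T: "at_most_finite T"
  shows "at_most_finite r" "coef r 0 = sqrt (coef T 0)"
proof -
  have "at_most_finite r \<and> coef r 0 = sqrt (coef T 0)"
  proof (cases "r = 0")
    case True
    with rT show ?thesis by (auto simp: at_most_finite_0)
  next
    case False
    note ml = coef_mult_lc_val[OF False False]
    have "coef T (lc_val r + lc_val r) \<noteq> 0" using ml(1) rT lc_val_leading(1)[OF False] by simp
    then have "0 \<le> lc_val r" using T unfolding at_most_finite_def by (meson add_nonneg_eq_0_iff not_le add_neg_neg)
    then have r_fin: "at_most_finite r" unfolding at_most_finite_def using lc_val_leading(2)[OF False] by simp
    show ?thesis
    proof (cases "lc_val r = 0")
      case True
      then have "0 < coef r 0" using r False by (simp add: lc_nonneg_def lc_pos_def)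
      moreover have "coef T 0 = coef r 0 * coef r 0" using coef_mult_at_0[OF r_fin r_fin] rT by simp
      ultimately show ?thesis using r_fin by simp
    next
      case False
      with \<open>0 \<le> lc_val r\<close> have "0 < lc_val r" by simp
      then have "coef r 0 = 0" "coef T 0 = 0"
        using lc_val_leading(2)[OF \<open>r \<noteq> 0\<close>] ml(2)[of 0] rT by simp_all
      then show ?thesis using r_fin by simp
    qed
  qed
  then show "at_most_finite r" "coef r 0 = sqrt (coef T 0)" by auto
qed

lemma at_most_finite_lc_cmod:
  assumes "at_most_finite z"
  shows "at_most_finite (lc_cmod z)" "coef (lc_cmod z) 0 = cmod (coef z 0)"
  using at_most_finite_nonneg_sqrt[OF lc_cmod_sqrt at_most_finite_lc_cmod_sq(1)[OF assms]]
  by (simp_all add: at_most_finite_lc_cmod_sq(2)[OF assms])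

lemma lc_cmod_eq_binomial_sqrt:
  assumes "at_most_finite z" "coef z 0 \<noteq> 0"
  shows "lc_cmod z = binomial_sqrt (lc_cmod_sq z)"
proof (rule lc_cmod_unique)
  have T: "at_most_finite (lc_cmod_sq z)" "0 < coef (lc_cmod_sq z) 0"
    using at_most_finite_lc_cmod_sq[OF assms(1)] assms(2) by auto
  show "binomial_sqrt (lc_cmod_sq z) * binomial_sqrt (lc_cmod_sq z) = lc_cmod_sq z"
    by (rule binomial_sqrt_square[OF T])
  show "lc_nonneg (binomial_sqrt (lc_cmod_sq z))"
    using T by (simp add: lc_nonneg_def lc_pos_if_coef_0_pos at_most_finite_binomial_sqrt)
qed

lemma lcr_le_antisym:
  assumes "lcr_le a b" "lcr_le b a" shows "a = b"
proof (rule ccontr)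
  assume ne: "a \<noteq> b"
  then have p1: "lcr_pos (\<lambda>q. b q - a q)" and p2: "lcr_pos (\<lambda>q. a q - b q)"
    using assms unfolding lcr_le_def by auto
  have "(\<lambda>q. a q - b q \<noteq> 0) = (\<lambda>q. b q - a q \<noteq> 0)" by (auto simp: fun_eq_iff)
  then have L: "(LEAST q. a q - b q \<noteq> 0) = (LEAST q. b q - a q \<noteq> 0)" by simp
  from p1 p2 show False unfolding lcr_pos_def L by simp
qed

lemma lc_maxnorm_eq_dominant:
  fixes Z :: "nat \<Rightarrow> complex lc"
  assumes i0: "i0 < n" and Z: "\<And>i. i < n \<Longrightarrow> at_most_finite (Z i)"
    and lt: "\<And>i. i < n \<Longrightarrow> i \<noteq> i0 \<Longrightarrow> cmod (coef (Z i) 0) < cmod (coef (Z i0) 0)"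
    and f: "\<And>i. i < n \<Longrightarrow> f i = coef (Z i)"
  shows "lc_maxnorm n f = coef (lc_cmod (Z i0))"
  unfolding lc_maxnorm_def
proof (rule the_equality)
  let ?m = "coef (lc_cmod (Z i0))"
  have le: "lcr_le (lcc_abs (f i)) ?m" if i: "i < n" for i
  proof (cases "i = i0")
    case True then show ?thesis using i by (simp add: f lcc_abs_coef lcr_le_def)
  next
    case False
    let ?D = "lc_cmod (Z i0) - lc_cmod (Z i)"
    have "lc_pos ?D"
      using lt[OF i False] Z i i0
      by (intro lc_pos_if_coef_0_pos) (simp_all add: at_most_finite_diff at_most_finite_lc_cmod)
    then have "lcr_pos (coef ?D)" by (simp add: lcr_pos_coef)
    moreover have "coef ?D = (\<lambda>q. ?m q - coef (lc_cmod (Z i)) q)" by (simp add: fun_eq_iff)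
    ultimately have "lcr_pos (\<lambda>q. ?m q - coef (lc_cmod (Z i)) q)" by simp
    then show ?thesis using i by (simp add: f lcc_abs_coef lcr_le_def)
  qed
  show "(\<exists>i<n. ?m = lcc_abs (f i)) \<and> (\<forall>i<n. lcr_le (lcc_abs (f i)) ?m)"
    using le i0 by (auto simp: f lcc_abs_coef)
  fix m assume m: "(\<exists>i<n. m = lcc_abs (f i)) \<and> (\<forall>i<n. lcr_le (lcc_abs (f i)) m)"
  then obtain j where j: "j < n" "m = lcc_abs (f j)" by auto
  have "lcr_le ?m m" using m i0 by (auto simp: f lcc_abs_coef)
  moreover have "lcr_le m ?m" using le[OF j(1)] j(2) by simp
  ultimately show "m = ?m" by (rule lcr_le_antisym[rotated])
qed

section \<open>Coefficientwise convergence\<close>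

definition support_monoid :: "rat set \<Rightarrow> bool" where
  "support_monoid M \<longleftrightarrow> 0 \<in> M \<and> (\<forall>a\<in>M. \<forall>b\<in>M. a + b \<in> M) \<and> (\<forall>a\<in>M. 0 \<le> a) \<and> (\<forall>r. finite {q\<in>M. q \<le> r})"

definition supported_in :: "rat set \<Rightarrow> 'a::zero lc \<Rightarrow> bool" where
  "supported_in M x \<longleftrightarrow> (\<forall>q. coef x q \<noteq> 0 \<longrightarrow> q \<in> M)"

text \<open>With all supports in one monoid \<open>M\<close>, each coefficient of a product is a sum over the same
  finite set of exponents, so this convergence is compatible with products.\<close>

definition converges_in :: "rat set \<Rightarrow> (nat \<Rightarrow> 'a::real_normed_field lc) \<Rightarrow> 'a lc \<Rightarrow> bool" where
  "converges_in M X L \<longleftrightarrow> eventually (\<lambda>k. supported_in M (X k)) sequentially \<and> supported_in M L \<and>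
     (\<forall>q. ((\<lambda>k. coef (X k) q) \<longlongrightarrow> coef L q) sequentially)"

lemma converges_inD:
  assumes "converges_in M X L"
  shows "eventually (\<lambda>k. supported_in M (X k)) sequentially" "supported_in M L"
    and "((\<lambda>k. coef (X k) q) \<longlongrightarrow> coef L q) sequentially"
  using assms by (simp_all add: converges_in_def)

lemma supported_in_imp_at_most_finite: "support_monoid M \<Longrightarrow> supported_in M x \<Longrightarrow> at_most_finite x"
  unfolding support_monoid_def supported_in_def at_most_finite_def by (meson not_le)

lemma supported_in_0: "supported_in M 0" by (simp add: supported_in_def)
lemma supported_in_lc_const: "support_monoid M \<Longrightarrow> supported_in M (lc_const c)" by (simp add: supported_in_def support_monoid_def coef_lc_const)
lemma supported_in_1: "support_monoid M \<Longrightarrow> supported_in M (1::'a::comm_ring_1 lc)" using supported_in_lc_const[of M "1::'a"] by (simp add: lc_const_one)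
lemma supported_in_add: "supported_in M x \<Longrightarrow> supported_in M y \<Longrightarrow> supported_in M (x + y)"
  unfolding supported_in_def by (metis add.right_neutral coef_add)
lemma supported_in_diff: "supported_in M x \<Longrightarrow> supported_in M y \<Longrightarrow> supported_in M (x - y)"
  unfolding supported_in_def by (metis coef_diff diff_self diff_zero)

lemma supported_in_mult:
  fixes x y :: "'a::comm_ring_1 lc"
  assumes "support_monoid M" "supported_in M x" "supported_in M y" shows "supported_in M (x * y)"
  unfolding supported_in_def
proof (intro allI impI)
  fix q assume "coef (x * y) q \<noteq> 0"
  then obtain q1 where "coef x q1 \<noteq> 0" "coef y (q - q1) \<noteq> 0" by (rule coef_mult_nonzeroE)
  then have "q1 \<in> M" "q - q1 \<in> M" using assms(2,3) unfolding supported_in_def by blast+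
  then have "q1 + (q - q1) \<in> M" using assms(1) unfolding support_monoid_def by blast
  then show "q \<in> M" by simp
qed

lemma supported_in_power: "support_monoid M \<Longrightarrow> supported_in M (x :: 'a::comm_ring_1 lc) \<Longrightarrow> supported_in M (x ^ n)"
  by (induction n) (simp_all add: supported_in_1 supported_in_mult)

lemma supported_in_fps_eval:
  fixes e :: "'a::comm_ring_1 lc"
  assumes "support_monoid M" "infinitesimal e" "supported_in M e" shows "supported_in M (fps_eval f e)"
  unfolding supported_in_def
proof (intro allI impI)
  fix q assume "coef (fps_eval f e) q \<noteq> 0"
  then have "(\<Sum>m\<le>nat \<lfloor>q / exponent_gap e\<rfloor>. fps_nth f m * coef (e ^ m) q) \<noteq> 0"
    by (simp add: coef_fps_eval_canonical[OF assms(2)])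
  then obtain m where "fps_nth f m * coef (e ^ m) q \<noteq> 0" by (meson sum.neutral)
  then have "coef (e ^ m) q \<noteq> 0" by auto
  then show "q \<in> M" using supported_in_power[OF assms(1,3)] unfolding supported_in_def by blast
qed

lemma supported_in_inverse:
  fixes u :: "'a::field lc"
  assumes M: "support_monoid M" and s: "supported_in M u" and u0: "coef u 0 \<noteq> 0"
  shows "supported_in M (inverse u)"
proof -
  have a: "at_most_finite u" by (rule supported_in_imp_at_most_finite[OF M s])
  have se: "supported_in M (unit_dev u)" unfolding unit_dev_def
    by (rule supported_in_diff[OF supported_in_mult[OF M supported_in_lc_const[OF M] s] supported_in_1[OF M]])
  show ?thesis unfolding inverse_eq_geom_inverse[OF a u0] geom_inverse_def
    by (rule supported_in_mult[OF M supported_in_lc_const[OF M] supported_in_fps_eval[OF M infinitesimal_unit_dev[OF a u0] se]])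
qed

lemma support_monoid_pos_gap: "support_monoid M \<Longrightarrow> 0 < pos_gap M"
  unfolding support_monoid_def by (intro pos_gap_pos) blast

lemma support_monoid_pos_gap_le:
  assumes "support_monoid M" "infinitesimal e" "supported_in M e"
  shows "\<forall>q. coef e q \<noteq> 0 \<longrightarrow> pos_gap M \<le> q"
  using assms unfolding support_monoid_def supported_in_def infinitesimal_def
  by (auto intro!: pos_gap_le simp: not_le[symmetric])

lemma coef_mult_supported_in:
  fixes x y :: "'a::comm_ring_1 lc"
  assumes "support_monoid M" "supported_in M x" "supported_in M y"
  shows "coef (x * y) q = (\<Sum>q1\<in>{p\<in>M. p \<le> q}. coef x q1 * coef y (q - q1))"
proof (rule coef_mult_eq_sum_superset)
  show "finite {p\<in>M. p \<le> q}" using assms(1) by (simp add: support_monoid_def)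
  fix q1 assume "coef x q1 \<noteq> 0" "coef y (q - q1) \<noteq> 0"
  then have "q1 \<in> M" "q - q1 \<in> M" using assms unfolding supported_in_def by blast+
  then have "0 \<le> q - q1" using assms(1) unfolding support_monoid_def by blast
  then show "q1 \<in> {p\<in>M. p \<le> q}" using \<open>q1 \<in> M\<close> by simp
qed

lemma converges_in_eventually_cong:
  assumes "converges_in M X L" "eventually (\<lambda>k. X k = Y k) sequentially"
  shows "converges_in M Y L"
proof -
  have e1: "eventually (\<lambda>k. supported_in M (Y k)) sequentially"
    using assms unfolding converges_in_def by (auto elim: eventually_elim2)
  have "\<And>q. ((\<lambda>k. coef (Y k) q) \<longlongrightarrow> coef L q) sequentially"
  proof -
    fix q
    have "((\<lambda>k. coef (X k) q) \<longlongrightarrow> coef L q) sequentially" using assms(1) by (simp add: converges_in_def)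
    moreover have "eventually (\<lambda>k. coef (X k) q = coef (Y k) q) sequentially"
      using assms(2) by (auto elim: eventually_mono)
    ultimately show "((\<lambda>k. coef (Y k) q) \<longlongrightarrow> coef L q) sequentially" by (rule Lim_transform_eventually)
  qed
  then show ?thesis using e1 assms(1) by (simp add: converges_in_def)
qed

lemma converges_in_const_seq: "supported_in M L \<Longrightarrow> converges_in M (\<lambda>k. L) L"
  by (simp add: converges_in_def)

lemma converges_in_lc_const:
  assumes "support_monoid M" "(a \<longlongrightarrow> c) sequentially"
  shows "converges_in M (\<lambda>k. lc_const (a k)) (lc_const c)"
  unfolding converges_in_def using assms by (simp add: supported_in_lc_const coef_lc_const)

lemma converges_in_add: "converges_in M X L \<Longrightarrow> converges_in M Y L' \<Longrightarrow> converges_in M (\<lambda>k. X k + Y k) (L + L')"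
  unfolding converges_in_def by (auto intro: tendsto_add supported_in_add elim: eventually_elim2)

lemma converges_in_diff: "converges_in M X L \<Longrightarrow> converges_in M Y L' \<Longrightarrow> converges_in M (\<lambda>k. X k - Y k) (L - L')"
  unfolding converges_in_def by (auto intro: tendsto_diff supported_in_diff elim: eventually_elim2)

lemma converges_in_mult:
  assumes M: "support_monoid M" and X: "converges_in M X L" and Y: "converges_in M Y L'"
  shows "converges_in M (\<lambda>k. X k * Y k) (L * L')"
proof -
  have supp: "eventually (\<lambda>k. supported_in M (X k) \<and> supported_in M (Y k)) sequentially"
    using X Y unfolding converges_in_def by (auto elim: eventually_elim2)
  have sL: "supported_in M L" "supported_in M L'" using X Y by (auto simp: converges_in_def)
  have "((\<lambda>k. coef (X k * Y k) q) \<longlongrightarrow> coef (L * L') q) sequentially" for q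
  proof -
    have "((\<lambda>k. \<Sum>q1\<in>{p\<in>M. p \<le> q}. coef (X k) q1 * coef (Y k) (q - q1)) \<longlongrightarrow>
           (\<Sum>q1\<in>{p\<in>M. p \<le> q}. coef L q1 * coef L' (q - q1))) sequentially"
      using X Y unfolding converges_in_def by (intro tendsto_sum tendsto_mult) auto
    moreover have "eventually (\<lambda>k. (\<Sum>q1\<in>{p\<in>M. p \<le> q}. coef (X k) q1 * coef (Y k) (q - q1)) = coef (X k * Y k) q) sequentially"
      using supp by (rule eventually_mono) (simp add: coef_mult_supported_in[OF M])
    ultimately have "((\<lambda>k. coef (X k * Y k) q) \<longlongrightarrow> (\<Sum>q1\<in>{p\<in>M. p \<le> q}. coef L q1 * coef L' (q - q1))) sequentially"
      by (rule Lim_transform_eventually)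
    then show ?thesis by (simp add: coef_mult_supported_in[OF M sL])
  qed
  moreover have "eventually (\<lambda>k. supported_in M (X k * Y k)) sequentially"
    using supp by (rule eventually_mono) (simp add: supported_in_mult[OF M])
  ultimately show ?thesis using supported_in_mult[OF M sL] by (simp add: converges_in_def)
qed

lemma converges_in_power:
  assumes "support_monoid M" "converges_in M X L" shows "converges_in M (\<lambda>k. X k ^ m) (L ^ m)"
proof (induction m)
  case 0 then show ?case using converges_in_const_seq[OF supported_in_1[OF assms(1)]] by simp
next
  case (Suc m) then show ?case using converges_in_mult[OF assms(1) assms(2) Suc] by simp
qed

lemma converges_in_sum:
  assumes "support_monoid M" "\<And>i. i \<in> I \<Longrightarrow> converges_in M (X i) (L i)"
  shows "converges_in M (\<lambda>k. \<Sum>i\<in>I. X i k) (\<Sum>i\<in>I. L i)"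
  using assms(2)
proof (induction I rule: infinite_finite_induct)
  case (infinite A) then show ?case using converges_in_const_seq[OF supported_in_0] by simp
next
  case empty then show ?case using converges_in_const_seq[OF supported_in_0] by simp
next
  case (insert x F) then show ?case by (simp add: converges_in_add)
qed

lemma converges_in_fps_eval:
  fixes E :: "nat \<Rightarrow> 'a::real_normed_field lc"
  assumes M: "support_monoid M" and E: "converges_in M E e" and sE: "eventually (\<lambda>k. infinitesimal (E k)) sequentially" and se: "infinitesimal e"
  shows "converges_in M (\<lambda>k. fps_eval f (E k)) (fps_eval f e)"
proof -
  have supp: "eventually (\<lambda>k. infinitesimal (E k) \<and> supported_in M (E k)) sequentially"
    using sE E unfolding converges_in_def by (auto elim: eventually_elim2)
  have she: "supported_in M e" using E by (simp add: converges_in_def)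
  have "((\<lambda>k. coef (fps_eval f (E k)) q) \<longlongrightarrow> coef (fps_eval f e) q) sequentially" for q
  proof -
    define N where "N = nat \<lfloor>q / pos_gap M\<rfloor>"
    have hq: "q < of_nat (Suc N) * pos_gap M" unfolding N_def by (rule less_Suc_floor_mult[OF support_monoid_pos_gap[OF M]])
    have P: "\<And>m. converges_in M (\<lambda>k. E k ^ m) (e ^ m)" by (rule converges_in_power[OF M E])
    have "((\<lambda>k. \<Sum>m\<le>N. fps_nth f m * coef (E k ^ m) q) \<longlongrightarrow> (\<Sum>m\<le>N. fps_nth f m * coef (e ^ m) q)) sequentially"
      using P unfolding converges_in_def by (intro tendsto_sum tendsto_mult tendsto_const) auto
    moreover have "eventually (\<lambda>k. (\<Sum>m\<le>N. fps_nth f m * coef (E k ^ m) q) = coef (fps_eval f (E k)) q) sequentially"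
      using supp
      by (rule eventually_mono) (metis coef_fps_eval[OF _ support_monoid_pos_gap[OF M] support_monoid_pos_gap_le[OF M] hq])
    ultimately have "((\<lambda>k. coef (fps_eval f (E k)) q) \<longlongrightarrow> (\<Sum>m\<le>N. fps_nth f m * coef (e ^ m) q)) sequentially"
      by (rule Lim_transform_eventually)
    then show ?thesis
      using coef_fps_eval[OF se support_monoid_pos_gap[OF M] support_monoid_pos_gap_le[OF M se she] hq] by simp
  qed
  moreover have "eventually (\<lambda>k. supported_in M (fps_eval f (E k))) sequentially"
    using supp by (rule eventually_mono) (simp add: supported_in_fps_eval[OF M])
  ultimately show ?thesis using supported_in_fps_eval[OF M se she] by (simp add: converges_in_def)
qed

lemma converges_in_eventually_coef_0_nonzero:
  assumes "converges_in M X L" "coef L 0 \<noteq> 0"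
  shows "eventually (\<lambda>k. coef (X k) 0 \<noteq> 0) sequentially"
proof -
  have "((\<lambda>k. coef (X k) 0) \<longlongrightarrow> coef L 0) sequentially" using assms(1) by (simp add: converges_in_def)
  then show ?thesis by (rule tendsto_imp_eventually_ne[OF _ assms(2)])
qed

lemma converges_in_unit_dev:
  fixes U :: "nat \<Rightarrow> 'a::real_normed_field lc"
  assumes M: "support_monoid M" and U: "converges_in M U u" and u0: "coef u 0 \<noteq> 0"
  shows "converges_in M (\<lambda>k. unit_dev (U k)) (unit_dev u)"
    and "eventually (\<lambda>k. infinitesimal (unit_dev (U k))) sequentially"
proof -
  have "((\<lambda>k. coef (U k) 0) \<longlongrightarrow> coef u 0) sequentially" using U by (simp add: converges_in_def)
  then show "converges_in M (\<lambda>k. unit_dev (U k)) (unit_dev u)"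
    unfolding unit_dev_def
    by (intro converges_in_diff converges_in_mult[OF M] converges_in_lc_const[OF M] tendsto_inverse
        converges_in_const_seq supported_in_1[OF M] U u0)
  have "eventually (\<lambda>k. coef (U k) 0 \<noteq> 0 \<and> supported_in M (U k)) sequentially"
    using converges_in_eventually_coef_0_nonzero[OF U u0] U
    unfolding converges_in_def by (auto elim: eventually_elim2)
  then show "eventually (\<lambda>k. infinitesimal (unit_dev (U k))) sequentially"
    by (rule eventually_mono) (auto intro: infinitesimal_unit_dev supported_in_imp_at_most_finite[OF M])
qed

lemma converges_in_fps_eval_unit_dev:
  fixes U :: "nat \<Rightarrow> 'a::real_normed_field lc"
  assumes M: "support_monoid M" and U: "converges_in M U u" and u0: "coef u 0 \<noteq> 0"
    and g: "isCont g (coef u 0)"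
  shows "converges_in M (\<lambda>k. lc_const (g (coef (U k) 0)) * fps_eval f (unit_dev (U k)))
           (lc_const (g (coef u 0)) * fps_eval f (unit_dev u))"
proof -
  have "((\<lambda>k. g (coef (U k) 0)) \<longlongrightarrow> g (coef u 0)) sequentially"
    using U g unfolding converges_in_def by (auto intro: isCont_tendsto_compose)
  moreover have "at_most_finite u" by (rule supported_in_imp_at_most_finite[OF M converges_inD(2)[OF U]])
  ultimately show ?thesis
    by (intro converges_in_mult[OF M] converges_in_lc_const[OF M] converges_in_fps_eval[OF M]
        converges_in_unit_dev[OF M U u0] infinitesimal_unit_dev u0)
qed

lemma converges_in_inverse:
  fixes U :: "nat \<Rightarrow> 'a::real_normed_field lc"
  assumes M: "support_monoid M" and U: "converges_in M U u" and u0: "coef u 0 \<noteq> 0"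
  shows "converges_in M (\<lambda>k. inverse (U k)) (inverse u)"
proof -
  have "at_most_finite u" by (rule supported_in_imp_at_most_finite[OF M converges_inD(2)[OF U]])
  moreover have "converges_in M (\<lambda>k. geom_inverse (U k)) (geom_inverse u)"
    unfolding geom_inverse_def
    by (rule converges_in_fps_eval_unit_dev[OF M U u0]) (use u0 in \<open>auto intro: continuous_intros\<close>)
  ultimately have "converges_in M (\<lambda>k. geom_inverse (U k)) (inverse u)"
    by (simp add: inverse_eq_geom_inverse u0)
  moreover have "eventually (\<lambda>k. geom_inverse (U k) = inverse (U k)) sequentially"
    using eventually_conj[OF converges_in_eventually_coef_0_nonzero[OF U u0] converges_inD(1)[OF U]]
    by (rule eventually_mono) (simp add: inverse_eq_geom_inverse supported_in_imp_at_most_finite[OF M])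
  ultimately show ?thesis by (rule converges_in_eventually_cong)
qed

lemma converges_in_lc_of_real:
  assumes "converges_in M T t" shows "converges_in M (\<lambda>k. lc_of_real (T k)) (lc_of_real t)"
proof -
  have s: "\<And>x. supported_in M x \<Longrightarrow> supported_in M (lc_of_real x)" by (simp add: supported_in_def coef_lc_of_real)
  show ?thesis using assms unfolding converges_in_def
    by (auto simp: coef_lc_of_real intro: tendsto_of_real s elim: eventually_mono)
qed

lemma converges_in_lc_Re:
  assumes "converges_in M Z z" shows "converges_in M (\<lambda>k. lc_Re (Z k)) (lc_Re z)"
  using assms unfolding converges_in_def supported_in_def
  by (auto simp: coef_lc_Re intro: tendsto_Re elim!: eventually_mono) (metis zero_complex.sel(1))+

lemma converges_in_lc_Im:
  assumes "converges_in M Z z" shows "converges_in M (\<lambda>k. lc_Im (Z k)) (lc_Im z)"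
  using assms unfolding converges_in_def supported_in_def
  by (auto simp: coef_lc_Im intro: tendsto_Im elim!: eventually_mono) (metis zero_complex.sel(2))+

lemma converges_in_lc_cmod_sq:
  assumes M: "support_monoid M" and Z: "converges_in M Z z"
  shows "converges_in M (\<lambda>k. lc_cmod_sq (Z k)) (lc_cmod_sq z)"
  unfolding lc_cmod_sq_def
  by (intro converges_in_add converges_in_mult[OF M] converges_in_lc_Re converges_in_lc_Im Z)

lemma converges_in_lc_cmod:
  assumes M: "support_monoid M" and Z: "converges_in M Z z" and z0: "coef z 0 \<noteq> 0"
  shows "converges_in M (\<lambda>k. lc_cmod (Z k)) (lc_cmod z)"
proof -
  have z: "at_most_finite z" by (rule supported_in_imp_at_most_finite[OF M converges_inD(2)[OF Z]])
  have "0 < coef (lc_cmod_sq z) 0" using at_most_finite_lc_cmod_sq[OF z] z0 by simp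
  then have "converges_in M (\<lambda>k. binomial_sqrt (lc_cmod_sq (Z k))) (binomial_sqrt (lc_cmod_sq z))"
    unfolding binomial_sqrt_def
    by (intro converges_in_fps_eval_unit_dev[OF M converges_in_lc_cmod_sq[OF M Z]] isCont_real_sqrt) simp
  then have "converges_in M (\<lambda>k. binomial_sqrt (lc_cmod_sq (Z k))) (lc_cmod z)"
    by (simp add: lc_cmod_eq_binomial_sqrt[OF z z0])
  moreover have "eventually (\<lambda>k. binomial_sqrt (lc_cmod_sq (Z k)) = lc_cmod (Z k)) sequentially"
    using eventually_conj[OF converges_in_eventually_coef_0_nonzero[OF Z z0] converges_inD(1)[OF Z]]
    by (rule eventually_mono) (simp add: lc_cmod_eq_binomial_sqrt supported_in_imp_at_most_finite[OF M])
  ultimately show ?thesis by (rule converges_in_eventually_cong)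
qed

lemma lc_wk_conv_eventually_cong:
  assumes "lc_wk_conv a l" "eventually (\<lambda>k. a k = b k) sequentially"
  shows "lc_wk_conv b l"
  unfolding lc_wk_conv_def
proof (intro allI impI)
  fix r :: real assume r: "0 < r"
  obtain N0 where N0: "\<forall>k>N0. lc_seminorm (\<lambda>q. a k q - l q) (1 / r) < r"
    using assms(1) r unfolding lc_wk_conv_def by blast
  obtain N1 where N1: "\<And>k. N1 \<le> k \<Longrightarrow> a k = b k" using assms(2) unfolding eventually_sequentially by blast
  have "\<forall>k>max N0 N1. lc_seminorm (\<lambda>q. b k q - l q) (1 / r) < r"
    using N0 N1 by (metis max.strict_boundedE less_imp_le)
  then show "\<exists>N0. \<forall>k>N0. lc_seminorm (\<lambda>q. b k q - l q) (1 / r) < r" by blast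
qed

lemma converges_in_eventually_uniform:
  fixes X :: "nat \<Rightarrow> 'a::real_normed_field lc"
  assumes M: "support_monoid M" and X: "converges_in M X L" and e: "0 < \<epsilon>"
  shows "eventually (\<lambda>k. \<forall>q\<le>R. norm (coef (X k) q - coef L q) < \<epsilon>) sequentially"
proof -
  have "finite {q\<in>M. q \<le> R}" using M unfolding support_monoid_def by blast
  then have "eventually (\<lambda>k. \<forall>q\<in>{q\<in>M. q \<le> R}. dist (coef (X k) q) (coef L q) < \<epsilon>) sequentially"
    using converges_inD(3)[OF X] e by (intro eventually_ball_finite ballI tendstoD) auto
  then show ?thesis
    using converges_inD(1)[OF X]
  proof eventually_elim
    case (elim k)
    show ?case
    proof (intro allI impI)
      fix q assume "q \<le> R"
      show "norm (coef (X k) q - coef L q) < \<epsilon>"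
      proof (cases "q \<in> M")
        case True with elim \<open>q \<le> R\<close> show ?thesis by (auto simp: dist_norm)
      next
        case False
        then have "coef (X k) q = 0" "coef L q = 0"
          using elim converges_inD(2)[OF X] unfolding supported_in_def by blast+
        with e show ?thesis by simp
      qed
    qed
  qed
qed

lemma lc_seminorm_le:
  assumes "0 \<le> s" "\<And>q. real_of_rat q \<le> s \<Longrightarrow> cmod (a q) \<le> B"
  shows "lc_seminorm a s \<le> B"
  unfolding lc_seminorm_def
proof (rule cSUP_least)
  show "{q. real_of_rat q \<le> s} \<noteq> {}" using assms(1) by (auto intro: exI[of _ 0])
qed (use assms(2) in auto)

lemma converges_in_imp_lc_wk_conv:
  fixes X :: "nat \<Rightarrow> complex lc"
  assumes M: "support_monoid M" and X: "converges_in M X L"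
  shows "lc_wk_conv (\<lambda>k. coef (X k)) (coef L)"
  unfolding lc_wk_conv_def
proof (intro allI impI)
  fix r :: real assume r: "0 < r"
  have ceil: "q \<le> of_int \<lceil>1 / r\<rceil>" if "real_of_rat q \<le> 1 / r" for q :: rat
  proof -
    have "real_of_rat q \<le> real_of_rat (of_int \<lceil>1 / r\<rceil>)" using that by (simp add: le_of_int_ceiling order_trans)
    then show ?thesis by (simp only: of_rat_less_eq)
  qed
  have "eventually (\<lambda>k. \<forall>q\<le>of_int \<lceil>1 / r\<rceil>. cmod (coef (X k) q - coef L q) < r / 2) sequentially"
    using r by (intro converges_in_eventually_uniform[OF M X]) simp
  then have "eventually (\<lambda>k. lc_seminorm (\<lambda>q. coef (X k) q - coef L q) (1 / r) \<le> r / 2) sequentially"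
  proof (rule eventually_mono)
    fix k assume k: "\<forall>q\<le>of_int \<lceil>1 / r\<rceil>. cmod (coef (X k) q - coef L q) < r / 2"
    show "lc_seminorm (\<lambda>q. coef (X k) q - coef L q) (1 / r) \<le> r / 2"
      using r k ceil by (intro lc_seminorm_le) (auto intro: less_imp_le)
  qed
  then have "eventually (\<lambda>k. lc_seminorm (\<lambda>q. coef (X k) q - coef L q) (1 / r) < r) sequentially"
    by (rule eventually_mono) (use r in linarith)
  then show "\<exists>N0. \<forall>k>N0. lc_seminorm (\<lambda>q. coef (X k) q - coef L q) (1 / r) < r"
    unfolding eventually_sequentially by (meson less_imp_le)
qed

lemma LIMSEQ_power_times_geometric:
  fixes r :: real
  assumes "0 \<le> r" "r < 1"
  shows "(\<lambda>k. real k ^ m * r ^ k) \<longlonglongrightarrow> 0"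
proof (cases "m = 0")
  case True
  then show ?thesis using LIMSEQ_power_zero[of r] assms by simp
next
  case False
  define s where "s = root m r"
  have s0: "0 \<le> s" and s1: "s < 1" using assms False by (auto simp: s_def)
  have sm: "s ^ m = r" using assms False by (simp add: s_def)
  have "(\<lambda>k. real k * s ^ k) \<longlonglongrightarrow> 0"
    using powser_times_n_limit_0[of s] s0 s1 by simp
  then have "(\<lambda>k. (real k * s ^ k) ^ m) \<longlonglongrightarrow> 0 ^ m" by (rule tendsto_power)
  moreover have "(\<lambda>k. (real k * s ^ k) ^ m) = (\<lambda>k. real k ^ m * r ^ k)"
    by (simp add: fun_eq_iff power_mult_distrib sm[symmetric] power_mult[symmetric] mult.commute)
  ultimately show ?thesis using False by (simp add: power_0_left)
qed

lemma LIMSEQ_binomial_times_power: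
  fixes a :: complex
  assumes "cmod a < 1"
  shows "(\<lambda>k. of_nat (k choose m) * a ^ (k - m)) \<longlonglongrightarrow> 0"
proof (cases "a = 0")
  case True
  have "eventually (\<lambda>k. 0 = of_nat (k choose m) * a ^ (k - m)) sequentially"
    using eventually_gt_at_top[of m] by (rule eventually_mono) (simp add: True)
  then show ?thesis by (rule Lim_transform_eventually[OF tendsto_const])
next
  case False
  define r where "r = cmod a"
  have r0: "0 < r" and r1: "r < 1" using False assms by (auto simp: r_def)
  have g: "(\<lambda>k. real k ^ m * r ^ k) \<longlonglongrightarrow> 0" using LIMSEQ_power_times_geometric[of r m] r0 r1 by simp
  show ?thesis
  proof (rule tendsto_0_le[OF g, where K="inverse r ^ m"])
    show "eventually (\<lambda>k. norm (of_nat (k choose m) * a ^ (k - m)) \<le> norm (real k ^ m * r ^ k) * inverse r ^ m) sequentially"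
      using eventually_ge_at_top[of m]
    proof (rule eventually_mono)
      fix k assume k: "m \<le> k"
      have "norm (of_nat (k choose m) * a ^ (k - m)) = real (k choose m) * r ^ (k - m)"
        by (simp add: norm_mult norm_power r_def)
      also have "\<dots> \<le> real k ^ m * r ^ (k - m)"
        using binomial_le_pow[OF k] r0 by (intro mult_right_mono) (simp_all add: of_nat_le_iff[symmetric])
      also have "r ^ (k - m) = r ^ k * inverse r ^ m"
        using k r0 by (simp add: power_diff power_inverse divide_inverse)
      finally show "norm (of_nat (k choose m) * a ^ (k - m)) \<le> norm (real k ^ m * r ^ k) * inverse r ^ m"
        using r0 by (simp add: mult_ac)
    qed
  qed
qed

lemma infinitesimal_diff_coef_0:
  fixes x :: "'a::comm_ring_1 lc"
  assumes "at_most_finite x"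
  shows "infinitesimal (x - lc_const (coef x 0))"
  unfolding infinitesimal_def
proof (intro allI impI)
  fix q :: rat assume "q \<le> 0"
  then show "coef (x - lc_const (coef x 0)) q = 0"
    using assms by (cases "q = 0") (auto simp: coef_lc_const at_most_finite_def)
qed

lemma coef_power_binomial:
  fixes x :: "'a::comm_ring_1 lc"
  shows "coef (x ^ k) q
    = (\<Sum>m\<le>k. of_nat (k choose m) * coef x 0 ^ (k - m) * coef ((x - lc_const (coef x 0)) ^ m) q)"
proof -
  let ?a = "coef x 0" and ?e = "x - lc_const (coef x 0)"
  have "x ^ k = (?e + lc_const ?a) ^ k" by simp
  also have "\<dots> = (\<Sum>m\<le>k. of_nat (k choose m) * ?e ^ m * lc_const ?a ^ (k - m))" by (rule binomial_ring)
  also have "\<dots> = (\<Sum>m\<le>k. lc_const (of_nat (k choose m) * ?a ^ (k - m)) * ?e ^ m)"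
    by (simp add: lc_const_power of_nat_eq_lc_const lc_const_mult mult_ac)
  finally show ?thesis by (simp add: coef_sum coef_lc_const_mult)
qed

lemma converges_in_power_zero:
  fixes \<rho> :: "complex lc"
  assumes M: "support_monoid M" and s: "supported_in M \<rho>" and a1: "cmod (coef \<rho> 0) < 1"
  shows "converges_in M (\<lambda>k. \<rho> ^ k) 0"
proof -
  let ?a = "coef \<rho> 0" and ?e = "\<rho> - lc_const (coef \<rho> 0)"
  have e: "infinitesimal ?e"
    by (rule infinitesimal_diff_coef_0[OF supported_in_imp_at_most_finite[OF M s]])
  have gap: "\<forall>q. coef ?e q \<noteq> 0 \<longrightarrow> pos_gap M \<le> q"
    by (rule support_monoid_pos_gap_le[OF M e supported_in_diff[OF s supported_in_lc_const[OF M]]])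
  have "((\<lambda>k. coef (\<rho> ^ k) q) \<longlongrightarrow> 0) sequentially" for q
  proof -
    define N where "N = nat \<lfloor>q / pos_gap M\<rfloor>"
    have hq: "q < of_nat (Suc N) * pos_gap M"
      unfolding N_def by (rule less_Suc_floor_mult[OF support_monoid_pos_gap[OF M]])
    have "((\<lambda>k. \<Sum>m\<le>N. of_nat (k choose m) * ?a ^ (k - m) * coef (?e ^ m) q) \<longlongrightarrow> (\<Sum>m\<le>N. 0 * coef (?e ^ m) q)) sequentially"
      using a1 by (intro tendsto_sum tendsto_mult LIMSEQ_binomial_times_power tendsto_const)
    moreover have "eventually (\<lambda>k. (\<Sum>m\<le>N. of_nat (k choose m) * ?a ^ (k - m) * coef (?e ^ m) q)
        = coef (\<rho> ^ k) q) sequentially"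
      using eventually_ge_at_top[of N]
    proof (rule eventually_mono)
      fix k assume "N \<le> k"
      from truncated_series_stable[OF gap support_monoid_pos_gap[OF M] hq this]
      show "(\<Sum>m\<le>N. of_nat (k choose m) * ?a ^ (k - m) * coef (?e ^ m) q) = coef (\<rho> ^ k) q"
        using coef_power_binomial[of \<rho> k q] by simp
    qed
    ultimately show ?thesis by (simp add: Lim_transform_eventually)
  qed
  then show ?thesis
    unfolding converges_in_def using supported_in_power[OF M s] by (simp add: supported_in_0)
qed

inductive_set pos_generated :: "rat set \<Rightarrow> rat set" for S where
  gen0: "0 \<in> pos_generated S"
| genS: "s \<in> S \<Longrightarrow> 0 < s \<Longrightarrow> m \<in> pos_generated S \<Longrightarrow> s + m \<in> pos_generated S"

lemma pos_generated_add: "a \<in> pos_generated S \<Longrightarrow> b \<in> pos_generated S \<Longrightarrow> a + b \<in> pos_generated S"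
proof (induction a rule: pos_generated.induct)
  case gen0 then show ?case by simp
next
  case (genS s m)
  then have "s + (m + b) \<in> pos_generated S" by (rule_tac pos_generated.genS) auto
  then show ?case by (simp add: add.assoc)
qed

lemma pos_generated_nonneg: "a \<in> pos_generated S \<Longrightarrow> 0 \<le> a"
  by (induction a rule: pos_generated.induct) auto

lemma pos_generated_member: "s \<in> S \<Longrightarrow> 0 \<le> s \<Longrightarrow> s \<in> pos_generated S"
proof (cases "s = 0")
  case True then show ?thesis by (simp add: pos_generated.gen0)
next
  case False
  assume "s \<in> S" "0 \<le> s"
  then have "s + 0 \<in> pos_generated S" using False by (intro pos_generated.genS pos_generated.gen0) auto
  then show ?thesis by simp
qed

lemma finite_pos_generated_le_mult:
  assumes fin: "\<And>r. finite {s\<in>S. s \<le> r}" and d: "0 < d" "\<And>s. s \<in> S \<Longrightarrow> 0 < s \<Longrightarrow> d \<le> s"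
  shows "finite {q\<in>pos_generated S. q \<le> of_nat k * d}"
proof (induction k)
  case 0
  have "{q\<in>pos_generated S. q \<le> of_nat 0 * d} \<subseteq> {0}" using pos_generated_nonneg by fastforce
  then show ?case by (rule finite_subset) simp
next
  case (Suc k)
  let ?sum = "(\<lambda>(s, m). s + m) ` ({s\<in>S. s \<le> of_nat (Suc k) * d} \<times> {q\<in>pos_generated S. q \<le> of_nat k * d})"
  have "{q\<in>pos_generated S. q \<le> of_nat (Suc k) * d} \<subseteq> insert 0 ?sum"
  proof
    fix q assume "q \<in> {q\<in>pos_generated S. q \<le> of_nat (Suc k) * d}"
    then have q: "q \<in> pos_generated S" "q \<le> of_nat (Suc k) * d" by auto
    from q(1) show "q \<in> insert 0 ?sum"
    proof (cases rule: pos_generated.cases)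
      case (genS s m)
      have "d \<le> s" "0 \<le> m" using d(2) pos_generated_nonneg genS by auto
      then have "s \<le> of_nat (Suc k) * d" "m \<le> of_nat k * d" using q(2) genS by (simp_all add: algebra_simps)
      then show ?thesis using genS by (intro insertI2 image_eqI[of _ _ "(s, m)"]) auto
    qed simp
  qed
  moreover have "finite (insert 0 ?sum)" using fin Suc.IH by simp
  ultimately show ?case by (rule finite_subset)
qed

lemma support_monoid_pos_generated:
  assumes fin: "\<And>r. finite {s\<in>S. s \<le> r}"
  shows "support_monoid (pos_generated S)"
proof -
  have d: "0 < pos_gap S" "\<And>s. s \<in> S \<Longrightarrow> 0 < s \<Longrightarrow> pos_gap S \<le> s"
    using fin by (simp_all add: pos_gap_pos pos_gap_le)
  have "finite {q\<in>pos_generated S. q \<le> r}" for r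
  proof -
    obtain k :: nat where "r / pos_gap S < of_nat k" using reals_Archimedean2 by blast
    then have "{q\<in>pos_generated S. q \<le> r} \<subseteq> {q\<in>pos_generated S. q \<le> of_nat k * pos_gap S}"
      using d(1) by (auto simp: divide_less_eq)
    then show ?thesis using finite_pos_generated_le_mult[OF fin d] by (rule finite_subset)
  qed
  then show ?thesis
    unfolding support_monoid_def using pos_generated_add pos_generated_nonneg pos_generated.gen0 by blast
qed

section \<open>Power iteration\<close>

lemma exists_support_monoid:
  fixes X :: "'a::zero lc set"
  assumes "finite X" "\<And>x. x \<in> X \<Longrightarrow> at_most_finite x"
  shows "\<exists>M. support_monoid M \<and> (\<forall>x\<in>X. supported_in M x)"
proof -
  define S where "S = {q. \<exists>x\<in>X. coef x q \<noteq> 0}"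
  have "finite {s\<in>S. s \<le> r}" for r
  proof -
    have "{s\<in>S. s \<le> r} = (\<Union>x\<in>X. {q. q \<le> r \<and> coef x q \<noteq> 0})" by (auto simp: S_def)
    then show ?thesis using assms(1) by (simp add: left_finite_finite_le)
  qed
  then have "support_monoid (pos_generated S)" by (rule support_monoid_pos_generated)
  moreover have "supported_in (pos_generated S) x" if "x \<in> X" for x
    unfolding supported_in_def
  proof (intro allI impI)
    fix q assume "coef x q \<noteq> 0"
    moreover have "0 \<le> q"
      using assms(2)[OF that] \<open>coef x q \<noteq> 0\<close> unfolding at_most_finite_def by (meson not_le)
    ultimately show "q \<in> pos_generated S" using that by (intro pos_generated_member) (auto simp: S_def)
  qed
  ultimately show ?thesis by blast
qed

lemma converges_in_dominant_term:
  fixes rho V :: "nat \<Rightarrow> complex lc"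
  assumes M: "support_monoid M" and V0: "supported_in M V0"
    and rho: "\<And>j. j \<in> J \<Longrightarrow> supported_in M (rho j)" "\<And>j. j \<in> J \<Longrightarrow> cmod (coef (rho j) 0) < 1"
    and V: "\<And>j. j \<in> J \<Longrightarrow> supported_in M (V j)"
  shows "converges_in M (\<lambda>k. V0 + (\<Sum>j\<in>J. rho j ^ k * V j)) V0"
proof -
  have "converges_in M (\<lambda>k. \<Sum>j\<in>J. rho j ^ k * V j) (\<Sum>j\<in>J. 0 * V j)"
    using rho V by (intro converges_in_sum[OF M] converges_in_mult[OF M] converges_in_power_zero[OF M]
        converges_in_const_seq)
  from converges_in_add[OF converges_in_const_seq[OF V0] this] show ?thesis by simp
qed

lemma sum_powers_eq_dominant_factor:
  fixes N :: "nat \<Rightarrow> 'a::field"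
  assumes "0 < n" "N 0 \<noteq> 0"
  shows "(\<Sum>j<n. N j ^ k * W j) = N 0 ^ k * (W 0 + (\<Sum>j\<in>{1..<n}. (N j / N 0) ^ k * W j))"
proof -
  have "{..<n} = insert 0 {1..<n}" using assms(1) by auto
  then show ?thesis
    using assms(2) by (simp add: distrib_left sum_distrib_left power_divide)
qed

lemma eventually_strict_dominance:
  fixes f :: "nat \<Rightarrow> nat \<Rightarrow> 'a::real_normed_vector"
  assumes f: "\<And>i. i < n \<Longrightarrow> (f i \<longlongrightarrow> l i) sequentially" and i0: "i0 < n"
    and dom: "\<And>i. i < n \<Longrightarrow> i \<noteq> i0 \<Longrightarrow> norm (l i) < norm (l i0)"
  shows "eventually (\<lambda>k. \<forall>i<n. i \<noteq> i0 \<longrightarrow> norm (f i k) < norm (f i0 k)) sequentially"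
proof -
  have "eventually (\<lambda>k. norm (f i k) < norm (f i0 k)) sequentially" if "i < n" "i \<noteq> i0" for i
  proof -
    have "((\<lambda>k. norm (f i0 k) - norm (f i k)) \<longlongrightarrow> norm (l i0) - norm (l i)) sequentially"
      using f i0 that by (intro tendsto_intros) auto
    then have "eventually (\<lambda>k. 0 < norm (f i0 k) - norm (f i k)) sequentially"
      by (rule order_tendstoD(1)) (use dom[OF that] in simp)
    then show ?thesis by (rule eventually_mono) simp
  qed
  then have "eventually (\<lambda>k. \<forall>i\<in>{i. i < n \<and> i \<noteq> i0}. norm (f i k) < norm (f i0 k)) sequentially"
    by (intro eventually_ball_finite) auto
  then show ?thesis by (rule eventually_mono) auto
qed

lemma lc_normalize_dominant:
  fixes Z :: "nat \<Rightarrow> complex lc" and c :: "real lc"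
  assumes i0: "i0 < n" and Z: "\<And>i. i < n \<Longrightarrow> at_most_finite (Z i)" and Z0: "coef (Z i0) 0 \<noteq> 0"
    and dom: "\<And>i. i < n \<Longrightarrow> i \<noteq> i0 \<Longrightarrow> cmod (coef (Z i) 0) < cmod (coef (Z i0) 0)"
    and c: "at_most_finite c" "0 < coef c 0"
    and f: "\<And>i. i < n \<Longrightarrow> f i = coef (lc_of_real c * Z i)" and i: "i < n"
  shows "lc_normalize n f i = coef (Z i * inverse (lc_of_real (lc_cmod (Z i0))))"
proof -
  have cZ: "at_most_finite (lc_of_real c * Z i)" "coef (lc_of_real c * Z i) 0 = of_real (coef c 0) * coef (Z i) 0"
    if "i < n" for i
    using c(1) Z[OF that] by (simp_all add: at_most_finite_mult at_most_finite_lc_of_real coef_mult_at_0 coef_lc_of_real)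
  have "lc_maxnorm n f = coef (lc_cmod (lc_of_real c * Z i0))"
    by (rule lc_maxnorm_eq_dominant[OF i0 cZ(1) _ f]) (use dom c(2) i0 in \<open>simp_all add: cZ(2) norm_mult\<close>)
  also have "lc_cmod (lc_of_real c * Z i0) = c * lc_cmod (Z i0)"
    using c by (simp add: lc_cmod_of_real_mult lc_nonneg_def lc_pos_if_coef_0_pos)
  finally have "lcc_of_lcr (lc_maxnorm n f) = coef (lc_of_real c * lc_of_real (lc_cmod (Z i0)))"
    by (simp add: lcc_of_lcr_coef lc_of_real_mult)
  moreover have "lc_of_real c \<noteq> 0" "lc_of_real (lc_cmod (Z i0)) \<noteq> 0"
    using c(2) at_most_finite_lc_cmod(2)[OF Z[OF i0]] Z0
    by (auto simp: lc_of_real_eq_0_iff dest: arg_cong[where f="\<lambda>x. coef x 0"])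
  ultimately show ?thesis
    by (simp add: lc_normalize_def lc_inverse_coef f[OF i] coef_mult[symmetric] field_simps)
qed

lemma lc_vec_wk_conv_normalize:
  fixes Z :: "nat \<Rightarrow> nat \<Rightarrow> complex lc" and c :: "nat \<Rightarrow> real lc"
  assumes M: "support_monoid M" and Z: "\<And>i. i < n \<Longrightarrow> converges_in M (Z i) (L i)"
    and i0: "i0 < n" "coef (L i0) 0 \<noteq> 0"
    and dom: "\<And>i. i < n \<Longrightarrow> i \<noteq> i0 \<Longrightarrow> cmod (coef (L i) 0) < cmod (coef (L i0) 0)"
    and c: "\<And>k. at_most_finite (c k)" "\<And>k. 0 < coef (c k) 0"
    and X: "\<And>k i. i < n \<Longrightarrow> X k i = coef (lc_of_real (c k) * Z i k)"
    and y: "\<And>i. i < n \<Longrightarrow> y i = coef (L i)"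
  shows "lc_vec_wk_conv n (\<lambda>k. lc_normalize n (X k)) (lc_normalize n y)"
  unfolding lc_vec_wk_conv_def
proof (intro allI impI)
  fix i assume i: "i < n"
  have fin: "at_most_finite (L i)" if "i < n" for i
    by (rule supported_in_imp_at_most_finite[OF M converges_inD(2)[OF Z[OF that]]])
  let ?D = "\<lambda>z. inverse (lc_of_real (lc_cmod z))"
  have lim: "lc_normalize n y i = coef (L i * ?D (L i0))"
    using lc_normalize_dominant[where c=1 and f=y and Z=L, OF i0(1) fin i0(2) dom] i y
    by (simp add: at_most_finite_1 coef_one lc_of_real_one)
  have "eventually (\<lambda>k. \<forall>i\<in>{..<n}. supported_in M (Z i k)) sequentially"
    using converges_inD(1)[OF Z] by (intro eventually_ball_finite) auto
  moreover have "eventually (\<lambda>k. \<forall>i<n. i \<noteq> i0 \<longrightarrow> cmod (coef (Z i k) 0) < cmod (coef (Z i0 k) 0)) sequentially"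
    by (rule eventually_strict_dominance[where f="\<lambda>i k. coef (Z i k) 0" and l="\<lambda>i. coef (L i) 0",
          OF converges_inD(3)[OF Z] i0(1) dom])
  moreover have "eventually (\<lambda>k. coef (Z i0 k) 0 \<noteq> 0) sequentially"
    by (rule converges_in_eventually_coef_0_nonzero[OF Z[OF i0(1)] i0(2)])
  ultimately have "eventually (\<lambda>k. coef (Z i k * ?D (Z i0 k)) = lc_normalize n (X k) i) sequentially"
  proof eventually_elim
    case (elim k)
    then have "\<And>i. i < n \<Longrightarrow> at_most_finite (Z i k)"
      using supported_in_imp_at_most_finite[OF M] by blast
    with elim show ?case by (intro lc_normalize_dominant[where c="c k", symmetric, OF i0(1)] c X i) auto
  qed
  moreover have "converges_in M (\<lambda>k. Z i k * ?D (Z i0 k)) (L i * ?D (L i0))"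
    using at_most_finite_lc_cmod(2)[OF fin[OF i0(1)]] i0
    by (intro converges_in_mult[OF M Z[OF i]] converges_in_inverse[OF M] converges_in_lc_of_real
        converges_in_lc_cmod[OF M Z]) (simp_all add: coef_lc_of_real)
  ultimately show "lc_wk_conv (\<lambda>k. lc_normalize n (X k) i) (lc_normalize n y i)"
    unfolding lim by (intro lc_wk_conv_eventually_cong[OF converges_in_imp_lc_wk_conv[OF M]])
qed

lemma lc_vec_wk_conv_power_iteration:
  fixes N :: "nat \<Rightarrow> complex lc" and W :: "nat \<Rightarrow> nat \<Rightarrow> complex lc" and \<mu> :: "real lc"
  assumes N0: "N 0 = lc_of_real \<mu>" "at_most_finite \<mu>" "coef \<mu> 0 = 1"
    and N: "\<And>j. j \<in> {1..<n} \<Longrightarrow> at_most_finite (N j)" "\<And>j. j \<in> {1..<n} \<Longrightarrow> cmod (coef (N j) 0) < 1"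
    and W: "\<And>j i. j < n \<Longrightarrow> i < n \<Longrightarrow> at_most_finite (W j i)"
    and d: "d < n" "coef (W 0 d) 0 \<noteq> 0"
    and dom: "\<And>i. i < n \<Longrightarrow> i \<noteq> d \<Longrightarrow> cmod (coef (W 0 i) 0) < cmod (coef (W 0 d) 0)"
    and X: "\<And>k i. i < n \<Longrightarrow> X k i = coef (\<Sum>j<n. N j ^ k * W j i)"
    and y: "\<And>i. i < n \<Longrightarrow> y i = coef (W 0 i)"
  shows "lc_vec_wk_conv n (\<lambda>k. lc_normalize n (X k)) (lc_normalize n y)"
proof -
  have n: "0 < n" using d by simp
  have N0_fin: "at_most_finite (N 0)" and N00: "coef (N 0) 0 = 1"
    using N0 by (simp_all add: at_most_finite_lc_of_real coef_lc_of_real)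
  have "\<forall>j<n. at_most_finite (N j)" using N(1) N0_fin by (metis atLeastLessThan_iff less_one not_le)
  then obtain M where M: "support_monoid M"
    and supp: "\<forall>x \<in> N ` {..<n} \<union> case_prod W ` ({..<n} \<times> {..<n}). supported_in M x"
    using exists_support_monoid[of "N ` {..<n} \<union> case_prod W ` ({..<n} \<times> {..<n})"] W by fastforce
  have suppN: "supported_in M (N j)" if "j < n" for j using supp that by blast
  have suppW: "supported_in M (W j i)" if "j < n" "i < n" for j i
    using supp that by (auto intro: image_eqI[of _ _ "(j, i)"])
  define \<rho> where "\<rho> j = N j / N 0" for j
  have \<rho>: "supported_in M (\<rho> j)" "cmod (coef (\<rho> j) 0) < 1" if j: "j \<in> {1..<n}" for j
  proof -
    have "supported_in M (N j)" "supported_in M (N 0)" using suppN j n by auto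
    then show "supported_in M (\<rho> j)"
      unfolding \<rho>_def divide_inverse by (intro supported_in_mult[OF M] supported_in_inverse[OF M]) (simp_all add: N00)
    have "coef (\<rho> j) 0 = coef (N j) 0"
      using N(1)[OF j] N0_fin N00
      by (simp add: \<rho>_def divide_inverse coef_mult_at_0 at_most_finite_inverse coef_inverse_at_0)
    then show "cmod (coef (\<rho> j) 0) < 1" using N(2)[OF j] by simp
  qed
  define Z where "Z i k = W 0 i + (\<Sum>j\<in>{1..<n}. \<rho> j ^ k * W j i)" for i k
  show ?thesis
  proof (rule lc_vec_wk_conv_normalize[where L="W 0" and Z=Z and c="\<lambda>k. \<mu> ^ k", OF M _ d dom])
    show "converges_in M (Z i) (W 0 i)" if "i < n" for i
      unfolding Z_def[abs_def] using suppW that n \<rho>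
      by (intro converges_in_dominant_term[OF M]) auto
    show "at_most_finite (\<mu> ^ k)" "0 < coef (\<mu> ^ k) 0" for k
      using N0 by (simp_all add: at_most_finite_power coef_power_at_0)
    show "X k i = coef (lc_of_real (\<mu> ^ k) * Z i k)" if "i < n" for k i
    proof -
      have "N 0 \<noteq> 0" using N00 by auto
      then show ?thesis
        by (simp add: X[OF that] sum_powers_eq_dominant_factor[OF n] N0(1)[symmetric] lc_of_real_power \<rho>_def Z_def)
    qed
  qed (use y in auto)
qed

lemma lc_matvec_coef:
  fixes A :: "nat \<Rightarrow> nat \<Rightarrow> rat \<Rightarrow> complex"
  assumes "lc_mat n A" "\<forall>l<n. x l = coef (V l)" "i < n"
  shows "lc_matvec n A x i = coef (\<Sum>l<n. Abs_lc (A i l) * V l)"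
proof -
  have "lc_mult (A i l) (x l) = coef (Abs_lc (A i l) * V l)" if "l < n" for l
    using assms that by (simp add: lc_mat_def coef_mult coef_Abs_lc)
  then show ?thesis by (auto simp: fun_eq_iff lc_matvec_def coef_sum intro!: sum.cong)
qed

lemma lc_matvec_power_eigen_expansion:
  fixes A :: "nat \<Rightarrow> nat \<Rightarrow> rat \<Rightarrow> complex" and w :: "nat \<Rightarrow> nat \<Rightarrow> rat \<Rightarrow> complex"
    and D :: "nat \<Rightarrow> complex lc"
  assumes A: "lc_mat n A" and w: "\<forall>j<n. lc_vec n (w j)"
    and x: "\<forall>i<n. x i = (\<lambda>q. \<Sum>j<n. w j i q)"
    and eig: "\<forall>j<n. \<forall>i<n. lc_matvec n A (w j) i = lc_mult (coef (D j)) (w j i)"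
  shows "i < n \<Longrightarrow> (lc_matvec n A ^^ k) x i = coef (\<Sum>j<n. D j ^ k * Abs_lc (w j i))"
proof (induction k arbitrary: i)
  case 0
  with x w show ?case by (auto simp: fun_eq_iff coef_sum lc_vec_def coef_Abs_lc)
next
  case (Suc k)
  let ?A = "\<lambda>l. Abs_lc (A i l)" and ?W = "\<lambda>j l. Abs_lc (w j l)"
  have eig_lc: "(\<Sum>l<n. ?A l * ?W j l) = D j * ?W j i" if "j < n" for j
  proof (rule lc_eqI)
    fix q
    have "coef (\<Sum>l<n. ?A l * ?W j l) q = lc_matvec n A (w j) i q"
      using lc_matvec_coef[OF A _ Suc.prems, of "w j" "?W j"] w that by (simp add: lc_vec_def coef_Abs_lc)
    then show "coef (\<Sum>l<n. ?A l * ?W j l) q = coef (D j * ?W j i) q"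
      using eig w that Suc.prems by (simp add: coef_mult lc_vec_def coef_Abs_lc)
  qed
  have "(lc_matvec n A ^^ Suc k) x i = coef (\<Sum>l<n. ?A l * (\<Sum>j<n. D j ^ k * ?W j l))"
    using lc_matvec_coef[OF A _ Suc.prems] Suc.IH by simp
  also have "(\<Sum>l<n. ?A l * (\<Sum>j<n. D j ^ k * ?W j l)) = (\<Sum>j<n. D j ^ k * (\<Sum>l<n. ?A l * ?W j l))"
    unfolding sum_distrib_left by (subst sum.swap) (simp add: mult.left_commute)
  also have "\<dots> = (\<Sum>j<n. D j ^ Suc k * ?W j i)" by (simp add: eig_lc mult_ac)
  finally show ?case .
qed

lemma unique_Max_imp_strict_dominance:
  fixes f :: "nat \<Rightarrow> 'a::linorder"
  assumes "\<exists>!i0. i0 < n \<and> f i0 = (MAX i\<in>{..<n}. f i)"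
  obtains i0 where "i0 < n" "\<And>i. i < n \<Longrightarrow> i \<noteq> i0 \<Longrightarrow> f i < f i0"
proof -
  from assms obtain i0 where i0: "i0 < n" "f i0 = (MAX i\<in>{..<n}. f i)"
    and uniq: "\<And>i. i < n \<Longrightarrow> f i = (MAX i\<in>{..<n}. f i) \<Longrightarrow> i = i0" by blast
  have "f i < f i0" if "i < n" "i \<noteq> i0" for i
  proof -
    have "f i \<le> f i0" using Max_ge[of "f ` {..<n}" "f i"] that(1) i0(2) by simp
    moreover have "f i \<noteq> f i0" using uniq[OF that(1)] i0(2) that(2) by auto
    ultimately show ?thesis by simp
  qed
  with i0(1) show ?thesis by (rule that)
qed

theorem mainTheorem9:
  fixes n :: nat
    and A :: "nat \<Rightarrow> nat \<Rightarrow> rat \<Rightarrow> complex"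
    and \<nu> :: "nat \<Rightarrow> rat \<Rightarrow> real"
    and x :: "nat \<Rightarrow> rat \<Rightarrow> complex"
    and w :: "nat \<Rightarrow> nat \<Rightarrow> rat \<Rightarrow> complex"
  assumes n_pos: "0 < n"
    and A_mat: "lc_mat n A"
    and nu_lf: "\<forall>j<n. lc_left_finite (\<nu> j)"
    and diag: "lc_diagonalizable_with n A (\<lambda>j. lcc_of_lcr (\<nu> j))"
    and nu_fin: "\<forall>j<n. lc_at_most_finite (\<nu> j)"
    and nu1: "\<nu> 0 0 = 1"
    and nu_lt: "\<forall>j. 1 \<le> j \<and> j < n \<longrightarrow> \<bar>\<nu> j 0\<bar> < 1"
    and nu_mono: "\<forall>j. 1 \<le> j \<and> j + 1 < n \<longrightarrow> \<bar>\<nu> (j + 1) 0\<bar> \<le> \<bar>\<nu> j 0\<bar>"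
    and x_vec: "lc_vec n x"
    and w_vec: "\<forall>j<n. lc_vec n (w j)"
    and x_sum: "\<forall>i<n. x i = (\<lambda>q. \<Sum>j<n. w j i q)"
    and w_eig: "\<forall>j<n. \<forall>i<n. lc_matvec n A (w j) i = lc_mult (lcc_of_lcr (\<nu> j)) (w j i)"
    and w_fin: "\<forall>j<n. \<forall>i<n. lc_at_most_finite (w j i)"
    and w1_nz: "\<exists>i<n. w 0 i 0 \<noteq> 0"
    and w1_unique: "\<exists>!i0. i0 < n \<and> cmod (w 0 i0 0) = (MAX i\<in>{..<n}. cmod (w 0 i 0))"
  shows "lc_vec_wk_conv n (\<lambda>k. lc_normalize n ((lc_matvec n A ^^ k) x)) (lc_normalize n (w 0))"
proof -
  define N where "N j = lc_of_real (Abs_lc (\<nu> j))" for j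
  define W where "W j i = Abs_lc (w j i)" for j i
  have coef_N: "coef (N j) = lcc_of_lcr (\<nu> j)" if "j < n" for j
    using nu_lf that coef_Abs_lc[of "\<nu> j"] lcc_of_lcr_coef[of "Abs_lc (\<nu> j)"] by (simp add: N_def)
  have coef_W: "coef (W j i) = w j i" if "j < n" "i < n" for j i
    using w_vec that by (simp add: W_def lc_vec_def coef_Abs_lc)
  obtain i0 where i0: "i0 < n" and dom: "\<And>i. i < n \<Longrightarrow> i \<noteq> i0 \<Longrightarrow> cmod (w 0 i 0) < cmod (w 0 i0 0)"
    using unique_Max_imp_strict_dominance[OF w1_unique] by blast
  have "w 0 i0 0 \<noteq> 0"
    using w1_nz dom by (metis norm_eq_zero norm_not_less_zero)
  show ?thesis
  proof (rule lc_vec_wk_conv_power_iteration[where N=N and W=W and d=i0])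
    show "N 0 = lc_of_real (Abs_lc (\<nu> 0))" by (simp add: N_def)
    show "at_most_finite (Abs_lc (\<nu> 0))" "coef (Abs_lc (\<nu> 0)) 0 = 1"
      using nu_lf nu_fin nu1 n_pos by (simp_all add: at_most_finite_def lc_at_most_finite_def coef_Abs_lc)
    show "at_most_finite (N j)" "cmod (coef (N j) 0) < 1" if "j \<in> {1..<n}" for j
      using that nu_fin nu_lt coef_N[of j]
      by (simp_all add: at_most_finite_def lc_at_most_finite_def lcc_of_lcr_def)
    show "(lc_matvec n A ^^ k) x i = coef (\<Sum>j<n. N j ^ k * W j i)" if "i < n" for k i
      unfolding W_def
      by (rule lc_matvec_power_eigen_expansion[OF A_mat w_vec x_sum _ that]) (use w_eig coef_N in simp)
  qed (use i0 dom coef_W w_fin \<open>w 0 i0 0 \<noteq> 0\<close> n_pos in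
      \<open>simp_all add: at_most_finite_def lc_at_most_finite_def\<close>)
qed

end
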